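(* Let $G$ be a profinite group, $A$ a commutative ring with $2A=0$ (discrete topology), and $D_0:A[G]\to A$ the trivial $2$-dimensional determinant (the determinant of the trivial representation $G\to\mathrm{GL}_2(A)$). Let $\mathcal T$ be the set of continuous $2$-dimensional determinants $D$ on $G$ over $A[\epsilon]$, $\epsilon^2=0$, with $D\otimes_{A[\epsilon]}A=D_0$. Each such $D$ has trace of the form $2+\epsilon\tau$ and restriction to $G$ of the form $1+\epsilon\delta$ for unique maps $\tau,\delta:G\to A$. The map $D\mapsto(\tau,\delta)$ is a bijection (linear for the natural $A$-module structure on $\mathcal T$) onto the set of pairs $(t,d)$ of continuous maps $G/G^2\to A$ with $t(1)=0$ and $d$ a group homomorphism, where $G^2$ is the closed subgroup of $G$ generated by squares.
   Context: A $2$-dimensional determinant on a group $G$ over a commutative ring $C$ is a multiplicative $C$-polynomial law $C[G]\to C$ homogeneous of degree $2$; its trace $\mathrm{Tr}$ and its restriction to $G$ are given by $\mathrm D(gU+hV)=\mathrm D(g)U^2+(\mathrm{Tr}(g)\mathrm{Tr}(h)-\mathrm{Tr}(gh))UV+\mathrm D(h)V^2$. It is continuous if $g\mapsto\mathrm{Tr}(g)$ and $g\mapsto\mathrm D(g)$ are continuous. $G^2$ is a closed normal subgroup with $G/G^2$ an elementary abelian pro-$2$ group. *)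

theory Defs
  imports "HOL-Analysis.Analysis" "HOL-Algebra.Generated_Groups" "HOL-Library.Poly_Mapping"
    "HOL-Computational_Algebra.Polynomial"
begin

datatype 'a dual = Dual (re: 'a) (eps: 'a)

instantiation dual :: (comm_ring_1) comm_ring_1
begin
definition "0 = Dual 0 0"
definition "1 = Dual 1 0"
definition "x + y = Dual (re x + re y) (eps x + eps y)"
definition "x - y = Dual (re x - re y) (eps x - eps y)"
definition "- x = Dual (- re x) (- eps x)"
definition "x * y = Dual (re x * re y) (re x * eps y + eps x * re y)"
instance
  by standard (auto simp: zero_dual_def one_dual_def plus_dual_def minus_dual_def
      uminus_dual_def times_dual_def algebra_simps intro!: dual.expand)
end

definition totally_disconnected_space :: "'a topology \<Rightarrow> bool" where
  "totally_disconnected_space T \<longleftrightarrow> (\<forall>S. connectedin T S \<longrightarrow> (\<exists>a. S \<subseteq> {a}))"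

definition profinite_group :: "('g, 'b) monoid_scheme \<Rightarrow> 'g topology \<Rightarrow> bool" where
  "profinite_group G T \<longleftrightarrow> group G \<and> topspace T = carrier G
     \<and> continuous_map (prod_topology T T) T (\<lambda>(x, y). x \<otimes>\<^bsub>G\<^esub> y)
     \<and> continuous_map T T (\<lambda>x. inv\<^bsub>G\<^esub> x)
     \<and> compact_space T \<and> Hausdorff_space T \<and> totally_disconnected_space T"

definition sq_subgroup :: "('g, 'b) monoid_scheme \<Rightarrow> 'g topology \<Rightarrow> 'g set" where
  "sq_subgroup G T = T closure_of (generate G {g \<otimes>\<^bsub>G\<^esub> g | g. g \<in> carrier G})"

text \<open>Elements of B[G] for a commutative ring B: finitely supported functions on carrier G.\<close>
definition galg_elem :: "('g, 'b) monoid_scheme \<Rightarrow> ('g \<Rightarrow> 'r::zero) \<Rightarrow> bool" where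
  "galg_elem G x \<longleftrightarrow> finite {g. x g \<noteq> 0} \<and> {g. x g \<noteq> 0} \<subseteq> carrier G"

definition galg_mult :: "('g, 'b) monoid_scheme \<Rightarrow> ('g \<Rightarrow> 'r::comm_ring_1) \<Rightarrow> ('g \<Rightarrow> 'r) \<Rightarrow> 'g \<Rightarrow> 'r" where
  "galg_mult G x y = (\<lambda>k. \<Sum>(g, h)\<in>{(g, h). x g \<noteq> 0 \<and> y h \<noteq> 0 \<and> g \<otimes>\<^bsub>G\<^esub> h = k}. x g * y h)"

definition galg_one :: "('g, 'b) monoid_scheme \<Rightarrow> 'g \<Rightarrow> 'r::comm_ring_1" where
  "galg_one G = (\<lambda>k. if k = \<one>\<^bsub>G\<^esub> then 1 else 0)"

definition monos2 :: "'g set \<Rightarrow> ('g \<Rightarrow>\<^sub>0 nat) set" where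
  "monos2 S = {\<alpha>. Poly_Mapping.keys \<alpha> \<subseteq> S \<and> (\<Sum>g\<in>Poly_Mapping.keys \<alpha>. Poly_Mapping.lookup \<alpha> g) = 2}"

text \<open>A C-polynomial law C[G] -> C homogeneous of degree 2 is given by its coefficient family
  c on degree-2 monomials; its value on x in B[G] (B a C-algebra via phi) is the following.\<close>
definition law_eval :: "(('g \<Rightarrow>\<^sub>0 nat) \<Rightarrow> 'c) \<Rightarrow> ('c \<Rightarrow> 'r::comm_ring_1) \<Rightarrow> ('g \<Rightarrow> 'r) \<Rightarrow> 'r" where
  "law_eval c \<phi> x = (\<Sum>\<alpha>\<in>monos2 {g. x g \<noteq> 0}. \<phi> (c \<alpha>) * (\<Prod>g\<in>Poly_Mapping.keys \<alpha>. x g ^ Poly_Mapping.lookup \<alpha> g))"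

definition law2 :: "('g, 'b) monoid_scheme \<Rightarrow> (('g \<Rightarrow>\<^sub>0 nat) \<Rightarrow> 'c::comm_ring_1) \<Rightarrow> bool" where
  "law2 G c \<longleftrightarrow> (\<forall>\<alpha>. \<alpha> \<notin> monos2 (carrier G) \<longrightarrow> c \<alpha> = 0)"

text \<open>Multiplicativity, tested on the generic elements, i.e. over the polynomial C-algebras
  C[X_(g,i)] (variables indexed by G x bool).\<close>
definition det2 :: "('g, 'b) monoid_scheme \<Rightarrow> (('g \<Rightarrow>\<^sub>0 nat) \<Rightarrow> 'c::comm_ring_1) \<Rightarrow> bool" where
  "det2 G c \<longleftrightarrow> law2 G c
     \<and> law_eval c (\<lambda>a. Poly_Mapping.single 0 a) (galg_one G)
         = (1 :: (('g \<times> bool) \<Rightarrow>\<^sub>0 nat) \<Rightarrow>\<^sub>0 'c)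
     \<and> (\<forall>x y :: 'g \<Rightarrow> (('g \<times> bool) \<Rightarrow>\<^sub>0 nat) \<Rightarrow>\<^sub>0 'c. galg_elem G x \<longrightarrow> galg_elem G y \<longrightarrow>
          law_eval c (\<lambda>a. Poly_Mapping.single 0 a) (galg_mult G x y)
          = law_eval c (\<lambda>a. Poly_Mapping.single 0 a) x * law_eval c (\<lambda>a. Poly_Mapping.single 0 a) y)"

text \<open>Trace: Tr(g) is minus the coefficient of t in the characteristic polynomial D(t - g).\<close>
definition det_trace :: "('g, 'b) monoid_scheme \<Rightarrow> (('g \<Rightarrow>\<^sub>0 nat) \<Rightarrow> 'c::comm_ring_1) \<Rightarrow> 'g \<Rightarrow> 'c" where
  "det_trace G c g = - coeff (law_eval c (\<lambda>a. [:a:])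
      (\<lambda>k. (if k = \<one>\<^bsub>G\<^esub> then [:0, 1:] else 0) - (if k = g then 1 else 0))) 1"

definition det_on :: "('g, 'b) monoid_scheme \<Rightarrow> (('g \<Rightarrow>\<^sub>0 nat) \<Rightarrow> 'c::comm_ring_1) \<Rightarrow> 'g \<Rightarrow> 'c" where
  "det_on G c g = law_eval c id (\<lambda>k. if k = g then 1 else 0)"

text \<open>The trivial determinant D_0(x) = det((sum_g x_g) I_2) = (sum_g x_g)^2.\<close>
definition trivial_det :: "('g, 'b) monoid_scheme \<Rightarrow> ('g \<Rightarrow>\<^sub>0 nat) \<Rightarrow> 'a::comm_ring_1" where
  "trivial_det G \<alpha> = (if \<alpha> \<in> monos2 (carrier G) then (if card (Poly_Mapping.keys \<alpha>) = 1 then 1 else 2) else 0)"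

text \<open>Base change A[eps] -> A (eps -> 0) of a law, on coefficients.\<close>
definition reduce_law :: "(('g \<Rightarrow>\<^sub>0 nat) \<Rightarrow> 'a dual) \<Rightarrow> ('g \<Rightarrow>\<^sub>0 nat) \<Rightarrow> 'a" where
  "reduce_law c = (\<lambda>\<alpha>. re (c \<alpha>))"

definition tangent_dets :: "('g, 'b) monoid_scheme \<Rightarrow> 'g topology \<Rightarrow> (('g \<Rightarrow>\<^sub>0 nat) \<Rightarrow> 'a::comm_ring_1 dual) set" where
  "tangent_dets G T = {c. det2 G c
      \<and> continuous_map T (discrete_topology UNIV) (det_trace G c)
      \<and> continuous_map T (discrete_topology UNIV) (det_on G c)
      \<and> reduce_law c = trivial_det G}"

text \<open>Natural A-module structure on the tangent space (fibre product over A, and eps -> a eps).\<close>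
definition tangent_add :: "(('g \<Rightarrow>\<^sub>0 nat) \<Rightarrow> 'a::comm_ring_1 dual) \<Rightarrow> (('g \<Rightarrow>\<^sub>0 nat) \<Rightarrow> 'a dual) \<Rightarrow> ('g \<Rightarrow>\<^sub>0 nat) \<Rightarrow> 'a dual" where
  "tangent_add c1 c2 = (\<lambda>\<alpha>. Dual (re (c1 \<alpha>)) (eps (c1 \<alpha>) + eps (c2 \<alpha>)))"

definition tangent_smult :: "'a::comm_ring_1 \<Rightarrow> (('g \<Rightarrow>\<^sub>0 nat) \<Rightarrow> 'a dual) \<Rightarrow> ('g \<Rightarrow>\<^sub>0 nat) \<Rightarrow> 'a dual" where
  "tangent_smult a c = (\<lambda>\<alpha>. Dual (re (c \<alpha>)) (a * eps (c \<alpha>)))"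

definition tau_delta :: "('g, 'b) monoid_scheme \<Rightarrow> (('g \<Rightarrow>\<^sub>0 nat) \<Rightarrow> 'a::comm_ring_1 dual) \<Rightarrow> ('g \<Rightarrow> 'a) \<times> ('g \<Rightarrow> 'a)" where
  "tau_delta G c = ((\<lambda>g\<in>carrier G. eps (det_trace G c g)), (\<lambda>g\<in>carrier G. eps (det_on G c g)))"

text \<open>Pairs (t, d) of continuous maps G/G^2 -> A (as maps on G invariant under G^2),
  t(1) = 0, d a homomorphism to (A, +).\<close>
definition quot_pairs :: "('g, 'b) monoid_scheme \<Rightarrow> 'g topology \<Rightarrow> (('g \<Rightarrow> 'a::comm_ring_1) \<times> ('g \<Rightarrow> 'a)) set" where
  "quot_pairs G T = {(t, d). t \<in> extensional (carrier G) \<and> d \<in> extensional (carrier G)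
      \<and> continuous_map T (discrete_topology UNIV) t \<and> continuous_map T (discrete_topology UNIV) d
      \<and> (\<forall>g\<in>carrier G. \<forall>h\<in>sq_subgroup G T. t (g \<otimes>\<^bsub>G\<^esub> h) = t g \<and> d (g \<otimes>\<^bsub>G\<^esub> h) = d g)
      \<and> t \<one>\<^bsub>G\<^esub> = 0
      \<and> (\<forall>g\<in>carrier G. \<forall>h\<in>carrier G. d (g \<otimes>\<^bsub>G\<^esub> h) = d g + d h)}"

end

theory Submission
  imports Defs
begin

text \<open>
  Since \<open>2 = 0\<close>, the coefficients of a tangent determinant \<open>D\<close> on the degree-two monomials are
  \<open>D(X\<^sub>g\<^sup>2) = 1 + \<epsilon>\<delta>(g)\<close> and \<open>D(X\<^sub>aX\<^sub>b) = \<epsilon>\<beta>(a, b)\<close>. Multiplicativity of \<open>D\<close> on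
  \<open>[g][h]\<close>, on \<open>[g]([1] + [k])\<close>, \<open>([1] + [k])[g]\<close> and on \<open>([1] + [g])([1] + [h])\<close> forces
  \<open>\<delta>\<close> to be additive, \<open>\<beta>(a, b) = \<tau>(a\<^sup>-\<^sup>1b)\<close> and \<open>\<tau>(gh) = \<tau>(h\<^sup>-\<^sup>1g)\<close>; together these make
  \<open>\<tau>\<close> and \<open>\<delta>\<close> invariant under right multiplication by squares, hence, being locally
  constant, under the closed subgroup \<open>G\<^sup>2\<close>.

  Conversely, a pair \<open>(t, d)\<close> invariant under squares satisfies
  \<open>t(b\<^sup>-\<^sup>1kc) = t(c\<^sup>-\<^sup>1kb)\<close>, and then the quadratic form \<open>Q\<close> with these coefficients is
  multiplicative on the group algebra: expanding \<open>Q(x\<cdot>y)\<close> along \<open>x\<close>, the cross term between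
  \<open>a\<cdot>y\<close> and \<open>g\<cdot>y\<close> is a symmetric double sum, which in characteristic two collapses to its
  diagonal \<open>\<epsilon>t(a\<^sup>-\<^sup>1g)\<Sum>\<^sub>by\<^sub>b\<^sup>2\<close>, and \<open>\<epsilon>Q(y) = \<epsilon>\<Sum>\<^sub>by\<^sub>b\<^sup>2\<close> because \<open>\<epsilon>\<^sup>2 = 0\<close>.
\<close>

definition mono_sq :: "'g \<Rightarrow> ('g \<Rightarrow>\<^sub>0 nat)" where
  "mono_sq g = Poly_Mapping.single g 2"

definition mono_pair :: "'g \<Rightarrow> 'g \<Rightarrow> ('g \<Rightarrow>\<^sub>0 nat)" where
  "mono_pair a b = Poly_Mapping.single a 1 + Poly_Mapping.single b 1"

lemma mono_pair_comm: "mono_pair a b = mono_pair b a"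
  by (simp add: mono_pair_def add.commute)

lemma lookup_mono_sq: "Poly_Mapping.lookup (mono_sq g) k = (if k = g then 2 else 0)"
  by (simp add: mono_sq_def lookup_single when_def)

lemma lookup_mono_pair:
  "a \<noteq> b \<Longrightarrow> Poly_Mapping.lookup (mono_pair a b) k = (if k = a \<or> k = b then 1 else 0)"
  by (auto simp add: mono_pair_def lookup_add lookup_single when_def)

lemma keys_mono_sq: "Poly_Mapping.keys (mono_sq g) = {g}"
  by (simp add: mono_sq_def)

lemma keys_mono_pair: "a \<noteq> b \<Longrightarrow> Poly_Mapping.keys (mono_pair a b) = {a, b}"
  by (auto simp add: in_keys_iff lookup_mono_pair split: if_splits)

lemma mono_sq_inj: "mono_sq g = mono_sq h \<Longrightarrow> g = h"
  by (metis keys_mono_sq singleton_inject)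

lemma mono_pair_eq:
  assumes "a \<noteq> b" "a' \<noteq> b'" "mono_pair a b = mono_pair a' b'"
  shows "(a' = a \<and> b' = b) \<or> (a' = b \<and> b' = a)"
proof -
  have "{a, b} = {a', b'}" using assms keys_mono_pair by metis
  thus ?thesis using assms(1,2) by (auto simp: doubleton_eq_iff)
qed

lemma sum_eq_2_cases:
  fixes f :: "'g \<Rightarrow> nat"
  assumes "finite K" "\<And>k. k \<in> K \<Longrightarrow> f k \<noteq> 0" "sum f K = 2"
  shows "(\<exists>g. K = {g} \<and> f g = 2) \<or> (\<exists>a b. a \<noteq> b \<and> K = {a, b} \<and> f a = 1 \<and> f b = 1)"
proof -
  have "card K \<le> sum f K"
    using assms(1,2)
  proof (induction K rule: finite_induct)
    case (insert x F)
    then have "f x \<ge> 1" by (simp add: Suc_le_eq)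
    with insert show ?case by simp
  qed simp
  hence "card K \<le> 2" using assms(3) by simp
  moreover have "card K \<noteq> 0" using assms(1,3) by auto
  ultimately have "card K = 1 \<or> card K = 2" by linarith
  thus ?thesis
  proof
    assume "card K = 1"
    then obtain g where "K = {g}" by (auto simp: card_Suc_eq)
    thus ?thesis using assms(3) by auto
  next
    assume "card K = 2"
    then obtain a b where ab: "K = {a, b}" "a \<noteq> b" by (auto simp: card_Suc_eq numeral_2_eq_2)
    hence "f a + f b = 2" "f a \<noteq> 0" "f b \<noteq> 0" using assms(2,3) by auto
    hence "f a = 1" "f b = 1" by linarith+
    thus ?thesis using ab by blast
  qed
qed

lemma monos2_eq:
  "monos2 S = mono_sq ` S \<union> (\<lambda>(a, b). mono_pair a b) ` {(a, b). a \<in> S \<and> b \<in> S \<and> a \<noteq> b}"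
proof (intro equalityI subsetI)
  fix \<alpha> assume "\<alpha> \<in> monos2 S"
  hence k: "Poly_Mapping.keys \<alpha> \<subseteq> S"
    and s: "(\<Sum>g\<in>Poly_Mapping.keys \<alpha>. Poly_Mapping.lookup \<alpha> g) = 2"
    by (auto simp: monos2_def)
  have "(\<exists>g. Poly_Mapping.keys \<alpha> = {g} \<and> Poly_Mapping.lookup \<alpha> g = 2) \<or>
    (\<exists>a b. a \<noteq> b \<and> Poly_Mapping.keys \<alpha> = {a, b}
       \<and> Poly_Mapping.lookup \<alpha> a = 1 \<and> Poly_Mapping.lookup \<alpha> b = 1)"
    by (rule sum_eq_2_cases[OF finite_keys _ s]) (simp add: in_keys_iff)
  then show "\<alpha> \<in> mono_sq ` S \<union> (\<lambda>(a, b). mono_pair a b) ` {(a, b). a \<in> S \<and> b \<in> S \<and> a \<noteq> b}"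
  proof (elim disjE exE conjE)
    fix g assume kg: "Poly_Mapping.keys \<alpha> = {g}" "Poly_Mapping.lookup \<alpha> g = 2"
    have "\<alpha> = mono_sq g"
      by (rule poly_mapping_eqI) (metis kg in_keys_iff lookup_mono_sq singletonD)
    thus ?thesis using k kg by auto
  next
    fix a b assume ab: "a \<noteq> b" "Poly_Mapping.keys \<alpha> = {a, b}"
      "Poly_Mapping.lookup \<alpha> a = 1" "Poly_Mapping.lookup \<alpha> b = 1"
    hence "\<alpha> = mono_pair a b"
      by (intro poly_mapping_eqI) (metis in_keys_iff insert_iff lookup_mono_pair singletonD)
    thus ?thesis using k ab by auto
  qed
next
  fix \<alpha>
  assume "\<alpha> \<in> mono_sq ` S \<union> (\<lambda>(a, b). mono_pair a b) ` {(a, b). a \<in> S \<and> b \<in> S \<and> a \<noteq> b}"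
  thus "\<alpha> \<in> monos2 S"
    by (auto simp: monos2_def keys_mono_sq keys_mono_pair lookup_mono_sq lookup_mono_pair)
qed

lemma finite_monos2: "finite S \<Longrightarrow> finite (monos2 S)"
  unfolding monos2_eq
  by (intro finite_UnI finite_imageI) (auto intro: finite_subset[of _ "S \<times> S"])

lemma monos2_empty: "monos2 {} = {}"
  by (simp add: monos2_eq)

lemma monos2_insert:
  assumes "g \<notin> S"
  shows "monos2 (insert g S) = monos2 S \<union> insert (mono_sq g) ((\<lambda>b. mono_pair g b) ` S)"
  unfolding monos2_eq using assms by (auto simp: image_iff mono_pair_comm)

section \<open>Quadratic forms given by their coefficients\<close>

definition mono_val :: "('g \<Rightarrow>\<^sub>0 nat) \<Rightarrow> ('g \<Rightarrow> 'r::comm_ring_1) \<Rightarrow> 'r" where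
  "mono_val \<alpha> x = (\<Prod>g\<in>Poly_Mapping.keys \<alpha>. x g ^ Poly_Mapping.lookup \<alpha> g)"

lemma mono_val_mono_sq: "mono_val (mono_sq g) x = x g ^ 2"
  by (simp add: mono_val_def keys_mono_sq lookup_mono_sq)

lemma mono_val_mono_pair: "a \<noteq> b \<Longrightarrow> mono_val (mono_pair a b) x = x a * x b"
  by (simp add: mono_val_def keys_mono_pair lookup_mono_pair)

definition quad_form_on :: "(('g \<Rightarrow>\<^sub>0 nat) \<Rightarrow> 'r::comm_ring_1) \<Rightarrow> 'g set \<Rightarrow> ('g \<Rightarrow> 'r) \<Rightarrow> 'r" where
  "quad_form_on cc S x = (\<Sum>\<alpha>\<in>monos2 S. cc \<alpha> * mono_val \<alpha> x)"

definition quad_form :: "(('g \<Rightarrow>\<^sub>0 nat) \<Rightarrow> 'r::comm_ring_1) \<Rightarrow> ('g \<Rightarrow> 'r) \<Rightarrow> 'r" where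
  "quad_form cc x = quad_form_on cc {k. x k \<noteq> 0} x"

lemma law_eval_eq_quad_form: "law_eval c \<phi> x = quad_form (\<phi> \<circ> c) x"
  by (simp add: law_eval_def quad_form_def quad_form_on_def mono_val_def)

lemma quad_form_on_empty: "quad_form_on cc {} x = 0"
  by (simp add: quad_form_on_def monos2_empty)

lemma quad_form_on_insert:
  assumes "finite S" "g \<notin> S"
  shows "quad_form_on cc (insert g S) x
    = quad_form_on cc S x + cc (mono_sq g) * x g ^ 2 + (\<Sum>b\<in>S. cc (mono_pair g b) * (x g * x b))"
proof -
  have ne: "b \<in> S \<Longrightarrow> g \<noteq> b" for b using assms(2) by auto
  have disj: "monos2 S \<inter> insert (mono_sq g) ((\<lambda>b. mono_pair g b) ` S) = {}"
    using assms(2) ne by (auto simp: monos2_def keys_mono_sq keys_mono_pair)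
  have sq_notin: "mono_sq g \<notin> (\<lambda>b. mono_pair g b) ` S"
  proof
    assume "mono_sq g \<in> (\<lambda>b. mono_pair g b) ` S"
    then obtain b where "b \<in> S" "mono_sq g = mono_pair g b" by auto
    hence "Poly_Mapping.lookup (mono_sq g) g = Poly_Mapping.lookup (mono_pair g b) g" by simp
    thus False using ne[OF \<open>b \<in> S\<close>] by (simp add: lookup_mono_sq lookup_mono_pair)
  qed
  have inj: "inj_on (\<lambda>b. mono_pair g b) S"
  proof (rule inj_onI)
    fix b b' assume "b \<in> S" "b' \<in> S" "mono_pair g b = mono_pair g b'"
    thus "b = b'" using mono_pair_eq[of g b g b'] ne by auto
  qed
  have "quad_form_on cc (insert g S) x = quad_form_on cc S x
      + (\<Sum>\<alpha>\<in>insert (mono_sq g) ((\<lambda>b. mono_pair g b) ` S). cc \<alpha> * mono_val \<alpha> x)"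
    unfolding quad_form_on_def monos2_insert[OF assms(2)]
    by (rule sum.union_disjoint) (use assms disj finite_monos2 in auto)
  also have "\<dots> = quad_form_on cc S x + cc (mono_sq g) * x g ^ 2
      + (\<Sum>b\<in>S. cc (mono_pair g b) * mono_val (mono_pair g b) x)"
    using sq_notin inj assms(1) by (simp add: sum.reindex mono_val_mono_sq add.assoc)
  also have "(\<Sum>b\<in>S. cc (mono_pair g b) * mono_val (mono_pair g b) x)
      = (\<Sum>b\<in>S. cc (mono_pair g b) * (x g * x b))"
    using ne by (intro sum.cong) (simp_all add: mono_val_mono_pair)
  finally show ?thesis .
qed

lemma quad_form_on_Un_zero:
  assumes "finite S0" "finite E" "\<And>k. k \<in> E \<Longrightarrow> x k = 0"
  shows "quad_form_on cc (S0 \<union> E) x = quad_form_on cc S0 x"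
  using assms(2,3)
proof (induction E rule: finite_induct)
  case (insert g E)
  show ?case
  proof (cases "g \<in> S0 \<union> E")
    case True
    hence "S0 \<union> insert g E = S0 \<union> E" by auto
    thus ?thesis using insert by simp
  next
    case False
    have "S0 \<union> insert g E = insert g (S0 \<union> E)" by auto
    thus ?thesis using insert False assms(1) by (simp add: quad_form_on_insert)
  qed
qed simp

lemma quad_form_eq_quad_form_on:
  assumes "finite S" "{k. x k \<noteq> 0} \<subseteq> S"
  shows "quad_form cc x = quad_form_on cc S x"
proof -
  have "S = {k. x k \<noteq> 0} \<union> (S - {k. x k \<noteq> 0})" using assms by auto
  hence "quad_form_on cc S x = quad_form_on cc {k. x k \<noteq> 0} x"
    using quad_form_on_Un_zero[of "{k. x k \<noteq> 0}" "S - {k. x k \<noteq> 0}" x cc] assms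
    by (metis (mono_tags, lifting) Diff_iff finite_Diff finite_subset mem_Collect_eq)
  thus ?thesis by (simp add: quad_form_def)
qed

lemma quad_form_zero: "quad_form cc (\<lambda>k. 0) = 0"
  by (simp add: quad_form_def quad_form_on_empty)

definition polar_coeff :: "(('g \<Rightarrow>\<^sub>0 nat) \<Rightarrow> 'r::comm_ring_1) \<Rightarrow> 'g \<Rightarrow> 'g \<Rightarrow> 'r" where
  "polar_coeff cc a b = (if a = b then 2 * cc (mono_sq a) else cc (mono_pair a b))"

lemma polar_coeff_comm: "polar_coeff cc a b = polar_coeff cc b a"
  by (simp add: polar_coeff_def mono_pair_comm)

definition polar :: "(('g \<Rightarrow>\<^sub>0 nat) \<Rightarrow> 'r::comm_ring_1) \<Rightarrow> 'g set \<Rightarrow> ('g \<Rightarrow> 'r) \<Rightarrow> ('g \<Rightarrow> 'r) \<Rightarrow> 'r" where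
  "polar cc S u v = (\<Sum>a\<in>S. \<Sum>b\<in>S. u a * v b * polar_coeff cc a b)"

lemma polar_add_left: "polar cc S (\<lambda>k. u k + u' k) v = polar cc S u v + polar cc S u' v"
  unfolding polar_def by (simp add: algebra_simps sum.distrib)

lemma polar_add_right: "polar cc S u (\<lambda>k. v k + v' k) = polar cc S u v + polar cc S u v'"
  unfolding polar_def by (simp add: algebra_simps sum.distrib)

lemma polar_sum_scale:
  "polar cc S (\<lambda>k. \<Sum>a\<in>F. c a * P a k) (\<lambda>k. d * Q k) = (\<Sum>a\<in>F. c a * d * polar cc S (P a) Q)"
proof -
  have termwise: "(\<Sum>a\<in>F. c a * P a k) * (d * Q l) * polar_coeff cc k l
      = (\<Sum>a\<in>F. c a * d * (P a k * Q l * polar_coeff cc k l))" for k l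
    unfolding sum_distrib_right by (rule sum.cong) (simp_all add: mult_ac)
  have "polar cc S (\<lambda>k. \<Sum>a\<in>F. c a * P a k) (\<lambda>k. d * Q k)
      = (\<Sum>k\<in>S. \<Sum>l\<in>S. \<Sum>a\<in>F. c a * d * (P a k * Q l * polar_coeff cc k l))"
    unfolding polar_def termwise ..
  also have "\<dots> = (\<Sum>a\<in>F. \<Sum>k\<in>S. \<Sum>l\<in>S. c a * d * (P a k * Q l * polar_coeff cc k l))"
    by (subst sum.swap) (intro sum.cong refl sum.swap)
  also have "\<dots> = (\<Sum>a\<in>F. c a * d * polar cc S (P a) Q)"
    unfolding polar_def by (simp add: sum_distrib_left)
  finally show ?thesis .
qed

lemma quad_form_on_add:
  assumes "finite S"
  shows "quad_form_on cc S (\<lambda>k. u k + v k) = quad_form_on cc S u + quad_form_on cc S v + polar cc S u v"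
  using assms
proof (induction S rule: finite_induct)
  case empty
  then show ?case by (simp add: quad_form_on_empty polar_def)
next
  case (insert g F)
  have pair: "b \<in> F \<Longrightarrow> polar_coeff cc g b = cc (mono_pair g b) \<and> polar_coeff cc b g = cc (mono_pair g b)"
    for b using insert(2) by (auto simp: polar_coeff_def mono_pair_comm)
  have "polar cc (insert g F) u v = (\<Sum>b\<in>insert g F. u g * v b * polar_coeff cc g b)
      + (\<Sum>a\<in>F. \<Sum>b\<in>insert g F. u a * v b * polar_coeff cc a b)"
    unfolding polar_def using insert(1,2) by simp
  also have "(\<Sum>b\<in>insert g F. u g * v b * polar_coeff cc g b)
      = u g * v g * (2 * cc (mono_sq g)) + (\<Sum>b\<in>F. u g * v b * cc (mono_pair g b))"
    using insert(1,2) pair by (simp add: polar_coeff_def)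
  also have "(\<Sum>a\<in>F. \<Sum>b\<in>insert g F. u a * v b * polar_coeff cc a b)
      = (\<Sum>a\<in>F. u a * v g * cc (mono_pair g a)) + polar cc F u v"
    unfolding polar_def using insert(1,2) pair by (simp add: sum.distrib)
  finally have "polar cc (insert g F) u v = polar cc F u v + u g * v g * (2 * cc (mono_sq g))
      + (\<Sum>b\<in>F. cc (mono_pair g b) * (u g * v b + u b * v g))"
    by (simp add: sum.distrib algebra_simps)
  thus ?case
    unfolding quad_form_on_insert[OF insert(1,2)] insert.IH
    by (simp add: sum.distrib algebra_simps power2_eq_square)
qed

lemma quad_form_on_scale: "quad_form_on cc S (\<lambda>k. c * x k) = c ^ 2 * quad_form_on cc S x"
proof -
  have "\<alpha> \<in> monos2 S \<Longrightarrow> mono_val \<alpha> (\<lambda>k. c * x k) = c ^ 2 * mono_val \<alpha> x" for \<alpha>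
    by (simp add: mono_val_def power_mult_distrib prod.distrib monos2_def flip: power_sum)
  thus ?thesis unfolding quad_form_on_def sum_distrib_left
    by (intro sum.cong) (auto simp: algebra_simps)
qed

lemma quad_form_add:
  assumes "finite S" "{k. u k \<noteq> 0} \<subseteq> S" "{k. v k \<noteq> 0} \<subseteq> S"
  shows "quad_form cc (\<lambda>k. u k + v k) = quad_form cc u + quad_form cc v + polar cc S u v"
proof -
  have "{k. u k + v k \<noteq> 0} \<subseteq> {k. u k \<noteq> 0} \<union> {k. v k \<noteq> 0}" by auto
  hence "{k. u k + v k \<noteq> 0} \<subseteq> S" using assms by blast
  thus ?thesis using assms by (simp add: quad_form_eq_quad_form_on[of S] quad_form_on_add)
qed

lemma quad_form_scale:
  assumes "finite {k. x k \<noteq> 0}"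
  shows "quad_form cc (\<lambda>k. c * x k) = c ^ 2 * quad_form cc x"
proof -
  have "{k. c * x k \<noteq> 0} \<subseteq> {k. x k \<noteq> 0}" by auto
  thus ?thesis using assms by (simp add: quad_form_eq_quad_form_on[of "{k. x k \<noteq> 0}"] quad_form_on_scale)
qed

definition single_fn :: "'g \<Rightarrow> 'r::zero \<Rightarrow> 'g \<Rightarrow> 'r" where
  "single_fn g p = (\<lambda>k. if k = g then p else 0)"

lemma single_fn_support: "{k. single_fn g p k \<noteq> 0} \<subseteq> {g}"
  by (auto simp: single_fn_def)

lemma finite_single_fn_support: "finite {k. single_fn g p k \<noteq> 0}"
  by (rule finite_subset[OF single_fn_support]) simp

lemma quad_form_single_fn: "quad_form cc (single_fn g p) = p ^ 2 * cc (mono_sq g)"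
proof -
  have "quad_form cc (single_fn g p) = quad_form_on cc (insert g {}) (single_fn g p)"
    by (rule quad_form_eq_quad_form_on) (auto simp: single_fn_def)
  thus ?thesis by (simp add: quad_form_on_insert quad_form_on_empty single_fn_def)
qed

lemma polar_single_fn_right:
  assumes "finite S" "l \<in> S"
  shows "polar cc S u (single_fn l c) = c * (\<Sum>k\<in>S. u k * polar_coeff cc k l)"
proof -
  have "polar cc S u (single_fn l c) = (\<Sum>a\<in>S. u a * c * polar_coeff cc a l)"
    unfolding polar_def single_fn_def using assms
    by (simp add: if_distrib[of "\<lambda>z. _ * z * _"] sum.delta cong: if_cong)
  thus ?thesis by (simp add: sum_distrib_left algebra_simps)
qed

lemma polar_single_fn:
  assumes "finite S" "a \<in> S" "b \<in> S"
  shows "polar cc S (single_fn a p) (single_fn b q) = p * q * polar_coeff cc a b"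
proof -
  have "(\<Sum>k\<in>S. single_fn a p k * polar_coeff cc k b) = p * polar_coeff cc a b"
    using assms by (simp add: single_fn_def if_distrib[of "\<lambda>z. z * _"] sum.delta cong: if_cong)
  thus ?thesis using assms by (simp add: polar_single_fn_right mult_ac)
qed

lemma quad_form_single_fn_add:
  "quad_form cc (\<lambda>k. single_fn a p k + single_fn b q k)
     = p ^ 2 * cc (mono_sq a) + q ^ 2 * cc (mono_sq b) + p * q * polar_coeff cc a b"
proof -
  have "quad_form cc (\<lambda>k. single_fn a p k + single_fn b q k) = quad_form cc (single_fn a p)
      + quad_form cc (single_fn b q) + polar cc {a, b} (single_fn a p) (single_fn b q)"
    by (rule quad_form_add) (auto simp: single_fn_def)
  thus ?thesis by (simp add: quad_form_single_fn polar_single_fn)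
qed

definition pushforward :: "('a \<Rightarrow> 'b) \<Rightarrow> ('a \<Rightarrow> 'r::comm_ring_1) \<Rightarrow> 'a set \<Rightarrow> 'b \<Rightarrow> 'r" where
  "pushforward f y B = (\<lambda>k. \<Sum>b\<in>B. if f b = k then y b else 0)"

lemma pushforward_support: "{k. pushforward f y B k \<noteq> 0} \<subseteq> f ` B"
proof
  fix k assume "k \<in> {k. pushforward f y B k \<noteq> 0}"
  hence "(\<Sum>b\<in>B. if f b = k then y b else 0) \<noteq> 0" by (simp add: pushforward_def)
  then obtain b where "b \<in> B" "(if f b = k then y b else 0) \<noteq> 0"
    using sum.not_neutral_contains_not_neutral by blast
  thus "k \<in> f ` B" by (auto split: if_splits)
qed

lemma sum_pushforward:
  assumes "finite S" "finite B" "f ` B \<subseteq> S"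
  shows "(\<Sum>k\<in>S. pushforward f y B k * F k) = (\<Sum>b\<in>B. y b * F (f b))"
proof -
  have "(\<Sum>k\<in>S. pushforward f y B k * F k) = (\<Sum>k\<in>S. \<Sum>b\<in>B. if f b = k then y b * F k else 0)"
    unfolding pushforward_def sum_distrib_right by (intro sum.cong refl) auto
  also have "\<dots> = (\<Sum>b\<in>B. \<Sum>k\<in>S. if f b = k then y b * F k else 0)"
    by (rule sum.swap)
  also have "\<dots> = (\<Sum>b\<in>B. y b * F (f b))"
    using assms by (intro sum.cong refl) (auto simp: sum.delta)
  finally show ?thesis .
qed

definition conv_on :: "('g, 'b) monoid_scheme \<Rightarrow> 'g set \<Rightarrow> 'g set \<Rightarrow> ('g \<Rightarrow> 'r::comm_ring_1)
    \<Rightarrow> ('g \<Rightarrow> 'r) \<Rightarrow> 'g \<Rightarrow> 'r" where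
  "conv_on G A B x y = (\<lambda>k. \<Sum>g\<in>A. x g * pushforward (\<lambda>h. g \<otimes>\<^bsub>G\<^esub> h) y B k)"

lemma galg_mult_eq_conv_on:
  assumes "finite A" "finite B" "{k. x k \<noteq> 0} \<subseteq> A" "{k. y k \<noteq> 0} \<subseteq> B"
  shows "galg_mult G x y = conv_on G A B x y"
proof
  fix k
  let ?P = "{(g, h). x g \<noteq> 0 \<and> y h \<noteq> 0 \<and> g \<otimes>\<^bsub>G\<^esub> h = k}"
  have "conv_on G A B x y k = (\<Sum>g\<in>A. \<Sum>h\<in>B. if g \<otimes>\<^bsub>G\<^esub> h = k then x g * y h else 0)"
    unfolding conv_on_def pushforward_def sum_distrib_left by (intro sum.cong refl) auto
  also have "\<dots> = (\<Sum>p\<in>A \<times> B. if fst p \<otimes>\<^bsub>G\<^esub> snd p = k then x (fst p) * y (snd p) else 0)"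
    by (simp add: sum.cartesian_product case_prod_beta)
  also have "\<dots> = (\<Sum>p\<in>?P. x (fst p) * y (snd p))"
  proof (rule sum.mono_neutral_cong_right)
    show "finite (A \<times> B)" using assms by simp
    show "?P \<subseteq> A \<times> B" using assms by auto
    show "\<forall>p\<in>A \<times> B - ?P. (if fst p \<otimes>\<^bsub>G\<^esub> snd p = k then x (fst p) * y (snd p) else 0) = 0"
      by auto
    show "\<And>p. p \<in> ?P \<Longrightarrow> (if fst p \<otimes>\<^bsub>G\<^esub> snd p = k then x (fst p) * y (snd p) else 0) = x (fst p) * y (snd p)"
      by auto
  qed
  also have "\<dots> = galg_mult G x y k"
    by (simp add: galg_mult_def case_prod_beta)
  finally show "galg_mult G x y k = conv_on G A B x y k" ..
qed

lemma conv_on_support: "{k. conv_on G A B x y k \<noteq> 0} \<subseteq> (\<lambda>(g, h). g \<otimes>\<^bsub>G\<^esub> h) ` (A \<times> B)"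
proof
  fix k assume "k \<in> {k. conv_on G A B x y k \<noteq> 0}"
  hence "(\<Sum>g\<in>A. x g * pushforward (\<lambda>h. g \<otimes>\<^bsub>G\<^esub> h) y B k) \<noteq> 0" by (simp add: conv_on_def)
  then obtain g where g: "g \<in> A" "x g * pushforward (\<lambda>h. g \<otimes>\<^bsub>G\<^esub> h) y B k \<noteq> 0"
    using sum.not_neutral_contains_not_neutral by blast
  hence "pushforward (\<lambda>h. g \<otimes>\<^bsub>G\<^esub> h) y B k \<noteq> 0" by (metis mult_zero_right)
  hence "k \<in> (\<lambda>h. g \<otimes>\<^bsub>G\<^esub> h) ` B" by (intro subsetD[OF pushforward_support]) simp
  then obtain h where h: "h \<in> B" "k = g \<otimes>\<^bsub>G\<^esub> h" by blast
  show "k \<in> (\<lambda>(g, h). g \<otimes>\<^bsub>G\<^esub> h) ` (A \<times> B)"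
    by (rule image_eqI[where x="(g, h)"]) (use g(1) h in simp_all)
qed

lemma galg_mult_add_left:
  assumes "finite {k. u k \<noteq> 0}" "finite {k. v k \<noteq> 0}" "finite {k. y k \<noteq> 0}"
  shows "galg_mult G (\<lambda>k. u k + v k) y = (\<lambda>m. galg_mult G u y m + galg_mult G v y m)"
proof -
  let ?A = "{k. u k \<noteq> 0} \<union> {k. v k \<noteq> 0}" and ?B = "{k. y k \<noteq> 0}"
  have "finite ?A" using assms by simp
  note conv = galg_mult_eq_conv_on[OF this assms(3) _ order_refl]
  have "{k. u k + v k \<noteq> 0} \<subseteq> ?A" by auto
  thus ?thesis by (simp add: conv conv_on_def distrib_right sum.distrib subset_iff)
qed

lemma galg_mult_add_right:
  assumes "finite {k. x k \<noteq> 0}" "finite {k. u k \<noteq> 0}" "finite {k. v k \<noteq> 0}"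
  shows "galg_mult G x (\<lambda>k. u k + v k) = (\<lambda>m. galg_mult G x u m + galg_mult G x v m)"
proof -
  let ?A = "{k. x k \<noteq> 0}" and ?B = "{k. u k \<noteq> 0} \<union> {k. v k \<noteq> 0}"
  have "finite ?B" using assms by simp
  note conv = galg_mult_eq_conv_on[OF assms(1) this order_refl]
  have "pushforward f (\<lambda>k. u k + v k) ?B m = pushforward f u ?B m + pushforward f v ?B m"
    for f :: "'a \<Rightarrow> 'a" and m
    unfolding pushforward_def by (auto simp: sum.distrib[symmetric] intro!: sum.cong)
  moreover have "{k. u k + v k \<noteq> 0} \<subseteq> ?B" by auto
  ultimately show ?thesis by (simp add: conv conv_on_def distrib_left sum.distrib subset_iff)
qed

lemma galg_mult_single_fn:
  "galg_mult G (single_fn a p) (single_fn b q) = single_fn (a \<otimes>\<^bsub>G\<^esub> b) (p * q)"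
proof -
  have "galg_mult G (single_fn a p) (single_fn b q) = conv_on G {a} {b} (single_fn a p) (single_fn b q)"
    by (rule galg_mult_eq_conv_on) (auto simp: single_fn_def)
  thus ?thesis unfolding conv_on_def pushforward_def single_fn_def by (auto simp: fun_eq_iff)
qed

lemma quad_form_remove_point:
  assumes "finite F" "h \<notin> F" "{k. y k \<noteq> 0} \<subseteq> insert h F"
  shows "quad_form cc y
    = quad_form cc (y(h := 0)) + y h ^ 2 * cc (mono_sq h) + y h * (\<Sum>b\<in>F. y b * polar_coeff cc b h)"
proof -
  have y_eq: "y = (\<lambda>k. (y(h := 0)) k + single_fn h (y h) k)" by (auto simp: single_fn_def)
  have "quad_form cc y = quad_form cc (y(h := 0)) + quad_form cc (single_fn h (y h))
      + polar cc (insert h F) (y(h := 0)) (single_fn h (y h))"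
    using assms by (subst y_eq, intro quad_form_add) (auto simp: single_fn_def)
  moreover have "(\<Sum>k\<in>insert h F. (y(h := 0)) k * polar_coeff cc k h) = (\<Sum>b\<in>F. y b * polar_coeff cc b h)"
    using assms(1,2) by (auto intro: sum.cong)
  ultimately show ?thesis using assms(1) by (simp add: quad_form_single_fn polar_single_fn_right)
qed

lemma double_sum_sym_char2:
  fixes y :: "'g \<Rightarrow> 'r::comm_ring_1"
  assumes "(2::'r) = 0" "finite B" "\<And>b c. b \<in> B \<Longrightarrow> c \<in> B \<Longrightarrow> f b c = f c b"
  shows "(\<Sum>b\<in>B. \<Sum>c\<in>B. y b * y c * f b c) = (\<Sum>b\<in>B. y b ^ 2 * f b b)"
  using assms(2,3)
proof (induction B rule: finite_induct)
  case (insert h F)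
  let ?row = "\<Sum>c\<in>F. y h * y c * f h c"
  have col: "(\<Sum>b\<in>F. y b * y h * f b h) = ?row"
    using insert.prems by (intro sum.cong refl) (auto simp: algebra_simps)
  have "?row + ?row = 2 * ?row" by simp
  hence twice: "?row + ?row = 0" using assms(1) by simp
  have "(\<Sum>b\<in>insert h F. \<Sum>c\<in>insert h F. y b * y c * f b c)
     = y h * y h * f h h + ?row + ((\<Sum>b\<in>F. y b * y h * f b h) + (\<Sum>b\<in>F. \<Sum>c\<in>F. y b * y c * f b c))"
    using insert.hyps by (simp add: sum.distrib)
  also have "\<dots> = y h * y h * f h h + (\<Sum>b\<in>F. \<Sum>c\<in>F. y b * y c * f b c)"
    unfolding col using twice by (simp add: algebra_simps)
  finally show ?case using insert by (simp add: power2_eq_square)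
qed simp

section \<open>Multiplicativity of first-order deformations in characteristic two\<close>

lemma (in group) inv_mult_cancel_left: "x \<in> carrier G \<Longrightarrow> y \<in> carrier G \<Longrightarrow> inv x \<otimes> (x \<otimes> y) = y"
  by (simp add: m_assoc[symmetric])

lemma (in group) inv_mult_cancel_right: "x \<in> carrier G \<Longrightarrow> y \<in> carrier G \<Longrightarrow> x \<otimes> (inv x \<otimes> y) = y"
  by (simp add: m_assoc[symmetric])

locale infinitesimal_det = group G for G :: "('g, 'b) monoid_scheme" (structure) +
  fixes cc :: "('g \<Rightarrow>\<^sub>0 nat) \<Rightarrow> 'r::comm_ring_1" and \<epsilon> :: 'r and \<tau> :: "'g \<Rightarrow> 'r"
  assumes char2: "(2::'r) = 0" and eps_square: "\<epsilon> * \<epsilon> = 0"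
    and diag_mult: "g \<in> carrier G \<Longrightarrow> h \<in> carrier G \<Longrightarrow> cc (mono_sq (g \<otimes> h)) = cc (mono_sq g) * cc (mono_sq h)"
    and eps_diag: "g \<in> carrier G \<Longrightarrow> \<epsilon> * cc (mono_sq g) = \<epsilon>"
    and polar_coeff_eq: "a \<in> carrier G \<Longrightarrow> b \<in> carrier G \<Longrightarrow> polar_coeff cc a b = \<epsilon> * \<tau> (inv a \<otimes> b)"
    and tau_sym: "b \<in> carrier G \<Longrightarrow> c \<in> carrier G \<Longrightarrow> k \<in> carrier G
      \<Longrightarrow> \<tau> (inv b \<otimes> k \<otimes> c) = \<tau> (inv c \<otimes> k \<otimes> b)"
    and tau_conj: "b \<in> carrier G \<Longrightarrow> k \<in> carrier G \<Longrightarrow> \<tau> (inv b \<otimes> k \<otimes> b) = \<tau> k"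
begin

lemma eps_mult_quad_form_on:
  assumes "finite B" "B \<subseteq> carrier G"
  shows "\<epsilon> * quad_form_on cc B y = \<epsilon> * (\<Sum>b\<in>B. y b ^ 2)"
  using assms
proof (induction B rule: finite_induct)
  case empty
  then show ?case by (simp add: quad_form_on_empty)
next
  case (insert h F)
  have pair: "\<epsilon> * cc (mono_pair h b) = 0" if "b \<in> F" for b
  proof -
    have "h \<noteq> b" "b \<in> carrier G" "h \<in> carrier G" using insert that by auto
    hence "cc (mono_pair h b) = \<epsilon> * \<tau> (inv h \<otimes> b)" using polar_coeff_eq[of h b] by (simp add: polar_coeff_def)
    thus ?thesis by (simp add: eps_square mult.assoc[symmetric])
  qed
  have "\<epsilon> * quad_form_on cc (insert h F) y = \<epsilon> * quad_form_on cc F y + \<epsilon> * cc (mono_sq h) * y h ^ 2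
      + (\<Sum>b\<in>F. \<epsilon> * cc (mono_pair h b) * (y h * y b))"
    using insert by (simp add: quad_form_on_insert algebra_simps sum_distrib_left)
  also have "\<dots> = \<epsilon> * quad_form_on cc F y + \<epsilon> * y h ^ 2"
    using insert by (simp add: pair eps_diag)
  finally show ?case using insert by (simp add: algebra_simps)
qed

lemma polar_coeff_mult_quad_form:
  assumes "a \<in> carrier G" "g \<in> carrier G" "finite B" "B \<subseteq> carrier G" "{k. y k \<noteq> 0} \<subseteq> B"
  shows "polar_coeff cc a g * quad_form cc y = polar_coeff cc a g * (\<Sum>b\<in>B. y b ^ 2)"
proof -
  have eps_quad: "\<epsilon> * quad_form cc y = \<epsilon> * (\<Sum>b\<in>B. y b ^ 2)"
    using assms by (simp add: quad_form_eq_quad_form_on[of B] eps_mult_quad_form_on)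
  have "polar_coeff cc a g * quad_form cc y = \<tau> (inv a \<otimes> g) * (\<epsilon> * quad_form cc y)"
    using assms by (simp add: polar_coeff_eq mult_ac)
  also have "\<dots> = polar_coeff cc a g * (\<Sum>b\<in>B. y b ^ 2)"
    using assms by (simp add: eps_quad polar_coeff_eq mult_ac)
  finally show ?thesis .
qed

lemma diag_mult_polar_coeff:
  assumes "g \<in> carrier G" "a \<in> carrier G" "b \<in> carrier G"
  shows "cc (mono_sq g) * polar_coeff cc a b = polar_coeff cc a b"
proof -
  have "cc (mono_sq g) * polar_coeff cc a b = \<tau> (inv a \<otimes> b) * (\<epsilon> * cc (mono_sq g))"
    using assms by (simp add: polar_coeff_eq mult_ac)
  thus ?thesis using assms by (simp add: eps_diag polar_coeff_eq mult_ac)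
qed

lemma polar_coeff_left_transl:
  assumes "g \<in> carrier G" "a \<in> carrier G" "b \<in> carrier G"
  shows "polar_coeff cc (g \<otimes> a) (g \<otimes> b) = polar_coeff cc a b"
  using assms by (simp add: polar_coeff_eq inv_mult_group m_assoc inv_mult_cancel_left)

lemma quad_form_left_transl:
  assumes "g \<in> carrier G" "finite B" "B \<subseteq> carrier G" "{k. y k \<noteq> 0} \<subseteq> B"
  shows "quad_form cc (pushforward (\<lambda>h. g \<otimes> h) y B) = cc (mono_sq g) * quad_form cc y"
  using assms(2-4)
proof (induction B arbitrary: y rule: finite_induct)
  case empty
  hence "y = (\<lambda>k. 0)" by auto
  thus ?case by (simp add: pushforward_def quad_form_zero)
next
  case (insert h F y)
  let ?L = "\<lambda>b. g \<otimes> b" and ?y' = "y(h := 0)"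
  let ?S = "?L ` insert h F"
  have hc: "h \<in> carrier G" "F \<subseteq> carrier G" using insert by auto
  have sy': "{k. ?y' k \<noteq> 0} \<subseteq> F" using insert.prems by auto
  have "pushforward ?L y F = pushforward ?L ?y' F"
    unfolding pushforward_def using insert.hyps by (intro ext sum.cong) auto
  hence pf_eq: "pushforward ?L y (insert h F) = (\<lambda>k. pushforward ?L ?y' F k + single_fn (g \<otimes> h) (y h) k)"
    using insert.hyps by (auto simp: pushforward_def single_fn_def fun_eq_iff)
  have "polar cc ?S (pushforward ?L ?y' F) (single_fn (g \<otimes> h) (y h))
      = y h * (\<Sum>k\<in>?S. pushforward ?L ?y' F k * polar_coeff cc k (g \<otimes> h))"
    using insert.hyps by (intro polar_single_fn_right) auto
  also have "\<dots> = y h * (\<Sum>b\<in>F. ?y' b * polar_coeff cc (g \<otimes> b) (g \<otimes> h))"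
    using insert.hyps by (subst sum_pushforward) auto
  also have "(\<Sum>b\<in>F. ?y' b * polar_coeff cc (g \<otimes> b) (g \<otimes> h)) = (\<Sum>b\<in>F. y b * polar_coeff cc b h)"
    using insert.hyps hc assms(1) by (intro sum.cong) (auto simp: polar_coeff_left_transl)
  finally have cross: "polar cc ?S (pushforward ?L ?y' F) (single_fn (g \<otimes> h) (y h))
      = y h * (\<Sum>b\<in>F. y b * polar_coeff cc b h)" .
  have "quad_form cc (pushforward ?L y (insert h F)) = quad_form cc (pushforward ?L ?y' F)
      + quad_form cc (single_fn (g \<otimes> h) (y h)) + polar cc ?S (pushforward ?L ?y' F) (single_fn (g \<otimes> h) (y h))"
    unfolding pf_eq
  proof (rule quad_form_add)
    show "{k. pushforward ?L ?y' F k \<noteq> 0} \<subseteq> ?S" by (rule order_trans[OF pushforward_support]) auto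
  qed (use insert.hyps in \<open>auto simp: single_fn_def\<close>)
  also have "\<dots> = cc (mono_sq g) * quad_form cc ?y'
      + y h ^ 2 * (cc (mono_sq g) * cc (mono_sq h)) + y h * (\<Sum>b\<in>F. y b * polar_coeff cc b h)"
    unfolding cross insert.IH[OF hc(2) sy'] using hc assms(1) by (simp add: quad_form_single_fn diag_mult)
  moreover have "cc (mono_sq g) * (\<Sum>b\<in>F. y b * polar_coeff cc b h) = (\<Sum>b\<in>F. y b * polar_coeff cc b h)"
    unfolding sum_distrib_left using hc assms(1)
    by (intro sum.cong refl) (auto simp: mult.left_commute[of "cc _"] diag_mult_polar_coeff)
  ultimately show ?case
    using quad_form_remove_point[OF insert.hyps insert.prems(2)] by (simp add: algebra_simps)
qed

lemma polar_left_transl: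
  assumes "a \<in> carrier G" "g \<in> carrier G" "finite B" "B \<subseteq> carrier G" "finite S"
    "(\<lambda>h. a \<otimes> h) ` B \<subseteq> S" "(\<lambda>h. g \<otimes> h) ` B \<subseteq> S"
  shows "polar cc S (pushforward (\<lambda>h. a \<otimes> h) y B) (pushforward (\<lambda>h. g \<otimes> h) y B)
    = polar_coeff cc a g * (\<Sum>b\<in>B. y b ^ 2)"
proof -
  let ?P = "pushforward (\<lambda>h. a \<otimes> h) y B" and ?Q = "pushforward (\<lambda>h. g \<otimes> h) y B"
  have coeff: "polar_coeff cc (a \<otimes> b) (g \<otimes> c) = \<epsilon> * \<tau> (inv b \<otimes> (inv a \<otimes> g) \<otimes> c)"
    if "b \<in> B" "c \<in> B" for b c
  proof -
    have "b \<in> carrier G" "c \<in> carrier G" using assms that by auto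
    moreover from this have "inv (a \<otimes> b) \<otimes> (g \<otimes> c) = inv b \<otimes> (inv a \<otimes> g) \<otimes> c"
      using assms by (simp add: inv_mult_group m_assoc)
    ultimately show ?thesis using assms by (simp add: polar_coeff_eq)
  qed
  have "polar cc S ?P ?Q = (\<Sum>k\<in>S. ?P k * (\<Sum>l\<in>S. ?Q l * polar_coeff cc k l))"
    unfolding polar_def by (intro sum.cong refl) (simp add: sum_distrib_left mult.assoc)
  also have "\<dots> = (\<Sum>k\<in>S. ?P k * (\<Sum>c\<in>B. y c * polar_coeff cc k (g \<otimes> c)))"
    by (intro sum.cong refl arg_cong[where f="\<lambda>z. _ * z"] sum_pushforward) (use assms in auto)
  also have "\<dots> = (\<Sum>b\<in>B. y b * (\<Sum>c\<in>B. y c * polar_coeff cc (a \<otimes> b) (g \<otimes> c)))"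
    by (rule sum_pushforward) (use assms in auto)
  also have "\<dots> = (\<Sum>b\<in>B. \<Sum>c\<in>B. y b * y c * (\<epsilon> * \<tau> (inv b \<otimes> (inv a \<otimes> g) \<otimes> c)))"
    by (simp add: coeff sum_distrib_left mult.assoc cong: sum.cong)
  also have "\<dots> = (\<Sum>b\<in>B. y b ^ 2 * (\<epsilon> * \<tau> (inv b \<otimes> (inv a \<otimes> g) \<otimes> b)))"
    using assms by (intro double_sum_sym_char2[OF char2 assms(3)]) (auto simp: tau_sym subset_iff)
  also have "\<dots> = (\<Sum>b\<in>B. y b ^ 2 * polar_coeff cc a g)"
    using assms by (intro sum.cong) (auto simp: tau_conj polar_coeff_eq)
  finally show ?thesis by (simp add: sum_distrib_left mult.commute)
qed

lemma polar_conv_on_left_transl: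
  assumes "g \<in> carrier G" "finite F" "F \<subseteq> carrier G" "finite B" "B \<subseteq> carrier G"
    and S: "finite S" "(\<lambda>(a, h). a \<otimes> h) ` (insert g F \<times> B) \<subseteq> S"
  shows "polar cc S (conv_on G F B x y) (\<lambda>k. z * pushforward (\<lambda>h. g \<otimes> h) y B k)
    = (\<Sum>a\<in>F. x a * z * (polar_coeff cc a g * (\<Sum>b\<in>B. y b ^ 2)))"
proof -
  have "polar cc S (pushforward (\<lambda>h. a \<otimes> h) y B) (pushforward (\<lambda>h. g \<otimes> h) y B)
      = polar_coeff cc a g * (\<Sum>b\<in>B. y b ^ 2)" if "a \<in> F" for a
    using assms that S by (intro polar_left_transl) auto
  thus ?thesis unfolding conv_on_def polar_sum_scale by simp
qed

lemma quad_form_conv_on: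
  assumes "finite A" "A \<subseteq> carrier G" "finite B" "B \<subseteq> carrier G"
    "{k. x k \<noteq> 0} \<subseteq> A" "{k. y k \<noteq> 0} \<subseteq> B"
  shows "quad_form cc (conv_on G A B x y) = quad_form cc x * quad_form cc y"
  using assms(1,2,5)
proof (induction A arbitrary: x rule: finite_induct)
  case empty
  hence "x = (\<lambda>k. 0)" by auto
  thus ?case by (simp add: conv_on_def quad_form_zero)
next
  case (insert g F x)
  let ?x' = "x(g := 0)" and ?Q = "pushforward (\<lambda>h. g \<otimes> h) y B"
  let ?S = "(\<lambda>(a, h). a \<otimes> h) ` (insert g F \<times> B)"
  have hc: "g \<in> carrier G" "F \<subseteq> carrier G" using insert by auto
  have sx': "{k. ?x' k \<noteq> 0} \<subseteq> F" using insert.prems by auto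
  have "conv_on G F B x y = conv_on G F B ?x' y"
    unfolding conv_on_def using insert.hyps by (intro ext sum.cong) auto
  hence conv_eq: "conv_on G (insert g F) B x y = (\<lambda>k. conv_on G F B ?x' y k + x g * ?Q k)"
    using insert.hyps by (simp add: conv_on_def add.commute fun_eq_iff)
  have fin_Q: "finite {k. ?Q k \<noteq> 0}"
    by (rule finite_subset[OF pushforward_support]) (use assms(3) in simp)
  have "quad_form cc (conv_on G (insert g F) B x y) = quad_form cc (conv_on G F B ?x' y)
      + quad_form cc (\<lambda>k. x g * ?Q k) + polar cc ?S (conv_on G F B ?x' y) (\<lambda>k. x g * ?Q k)"
    unfolding conv_eq
  proof (rule quad_form_add)
    show "{k. conv_on G F B ?x' y k \<noteq> 0} \<subseteq> ?S" by (rule order_trans[OF conv_on_support]) auto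
    show "{k. x g * ?Q k \<noteq> 0} \<subseteq> ?S"
    proof
      fix k assume "k \<in> {k. x g * ?Q k \<noteq> 0}"
      hence "k \<in> (\<lambda>h. g \<otimes> h) ` B" using pushforward_support[of "\<lambda>h. g \<otimes> h" y B] by force
      thus "k \<in> ?S" by force
    qed
  qed (use insert.hyps assms(3) in simp)
  also have "\<dots> = quad_form cc ?x' * quad_form cc y + x g ^ 2 * (cc (mono_sq g) * quad_form cc y)
      + (\<Sum>a\<in>F. ?x' a * x g * (polar_coeff cc a g * (\<Sum>b\<in>B. y b ^ 2)))"
  proof -
    have "quad_form cc (\<lambda>k. x g * ?Q k) = x g ^ 2 * (cc (mono_sq g) * quad_form cc y)"
      using quad_form_scale[OF fin_Q] quad_form_left_transl[OF hc(1) assms(3,4,6)] by simp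
    moreover have "polar cc ?S (conv_on G F B ?x' y) (\<lambda>k. x g * ?Q k)
        = (\<Sum>a\<in>F. ?x' a * x g * (polar_coeff cc a g * (\<Sum>b\<in>B. y b ^ 2)))"
      by (rule polar_conv_on_left_transl) (use hc insert.hyps assms(3,4) in auto)
    ultimately show ?thesis by (simp only: insert.IH[OF hc(2) sx'])
  qed
  also have "(\<Sum>a\<in>F. ?x' a * x g * (polar_coeff cc a g * (\<Sum>b\<in>B. y b ^ 2)))
      = (\<Sum>a\<in>F. x a * x g * (polar_coeff cc a g * quad_form cc y))"
    using hc insert.hyps by (intro sum.cong refl) (auto simp: polar_coeff_mult_quad_form[OF _ _ assms(3,4,6)])
  also have "\<dots> = x g * (\<Sum>a\<in>F. x a * polar_coeff cc a g) * quad_form cc y"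
    by (simp add: sum_distrib_left sum_distrib_right mult_ac)
  finally show ?case
    unfolding quad_form_remove_point[OF insert.hyps insert.prems(2)] by (simp add: algebra_simps fun_upd_def)
qed

lemma quad_form_galg_mult:
  assumes "finite {k. x k \<noteq> 0}" "{k. x k \<noteq> 0} \<subseteq> carrier G"
    "finite {k. y k \<noteq> 0}" "{k. y k \<noteq> 0} \<subseteq> carrier G"
  shows "quad_form cc (galg_mult G x y) = quad_form cc x * quad_form cc y"
  unfolding galg_mult_eq_conv_on[OF assms(1,3) order_refl order_refl]
  by (rule quad_form_conv_on[OF assms order_refl order_refl])

end

lemma re_add [simp]: "re (x + y) = re x + re y" by (simp add: plus_dual_def)
lemma eps_add [simp]: "eps (x + y) = eps x + eps y" by (simp add: plus_dual_def)
lemma re_mult [simp]: "re (x * y) = re x * re y" by (simp add: times_dual_def)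
lemma eps_mult [simp]: "eps (x * y) = re x * eps y + eps x * re y" by (simp add: times_dual_def)
lemma re_zero [simp]: "re 0 = 0" by (simp add: zero_dual_def)
lemma eps_zero [simp]: "eps 0 = 0" by (simp add: zero_dual_def)
lemma re_one [simp]: "re 1 = 1" by (simp add: one_dual_def)
lemma eps_one [simp]: "eps 1 = 0" by (simp add: one_dual_def)
lemma re_two [simp]: "re (2 :: 'a::comm_ring_1 dual) = 2" by (metis one_add_one re_add re_one)
lemma eps_two [simp]: "eps (2 :: 'a::comm_ring_1 dual) = 0" by (metis add_0 one_add_one eps_add eps_one)
lemma Dual_zero [simp]: "Dual 0 0 = 0" by (simp add: zero_dual_def)
lemma Dual_one [simp]: "Dual 1 0 = 1" by (simp add: one_dual_def)
lemma Dual_mult: "Dual a b * Dual c d = Dual (a * c) (a * d + b * c)" by (simp add: times_dual_def)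

lemma dual_eqI: "re x = re y \<Longrightarrow> eps x = eps y \<Longrightarrow> x = y"
  by (rule dual.expand) simp

lemma dual_two_eq_0: "(2::'a::comm_ring_1) = 0 \<Longrightarrow> (2 :: 'a dual) = 0"
  by (rule dual_eqI) simp_all

lemma det_on_eq: "det_on G c g = c (mono_sq g)"
proof -
  have "det_on G c g = quad_form (id \<circ> c) (single_fn g 1)"
    by (simp add: det_on_def law_eval_eq_quad_form single_fn_def)
  thus ?thesis by (simp add: quad_form_single_fn)
qed

lemma polar_coeff_const_poly: "polar_coeff (\<lambda>\<alpha>. [:c \<alpha>:]) a b = [:polar_coeff c a b:]"
proof -
  have "(2::'a poly) * [:x:] = [:2 * x:]" for x :: 'a
    by (subst numeral_poly) simp
  thus ?thesis by (simp add: polar_coeff_def)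
qed

lemma det_trace_eq: "det_trace G c g = polar_coeff c \<one>\<^bsub>G\<^esub> g"
proof -
  have char_arg: "(\<lambda>k. (if k = \<one>\<^bsub>G\<^esub> then [:0, 1:] else 0) - (if k = g then 1 else 0))
      = (\<lambda>k. single_fn \<one>\<^bsub>G\<^esub> [:0, 1:] k + single_fn g (- 1) k)"
    by (auto simp: fun_eq_iff single_fn_def)
  have "law_eval c (\<lambda>a. [:a:]) (\<lambda>k. (if k = \<one>\<^bsub>G\<^esub> then [:0, 1:] else 0) - (if k = g then 1 else 0))
      = [:0, 1:] ^ 2 * [:c (mono_sq \<one>\<^bsub>G\<^esub>):] + [:c (mono_sq g):] - [:0, 1:] * [:polar_coeff c \<one>\<^bsub>G\<^esub> g:]"
    unfolding law_eval_eq_quad_form char_arg quad_form_single_fn_add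
    by (simp add: o_def polar_coeff_const_poly)
  thus ?thesis unfolding det_trace_def by (simp add: power2_eq_square)
qed

definition const_pm :: "'r::comm_ring_1 \<Rightarrow> ('v \<Rightarrow>\<^sub>0 nat) \<Rightarrow>\<^sub>0 'r" where
  "const_pm = Poly_Mapping.single 0"

lemma const_pm_add: "const_pm (a + b) = const_pm a + const_pm b" by (simp add: const_pm_def single_add)
lemma const_pm_mult: "const_pm (a * b) = const_pm a * const_pm b" by (simp add: const_pm_def mult_single)
lemma const_pm_one: "const_pm 1 = 1" by (simp add: const_pm_def)
lemma const_pm_zero: "const_pm 0 = 0" by (simp add: const_pm_def)

lemma const_pm_eq_iff: "const_pm a = const_pm b \<longleftrightarrow> a = b"
  by (simp add: const_pm_def inj_eq[OF inj_single])

lemma const_pm_eq_0: "const_pm a = 0 \<longleftrightarrow> a = 0"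
  using const_pm_eq_iff[of a 0] by (simp add: const_pm_zero)

lemma const_pm_sum: "const_pm (sum f A) = (\<Sum>a\<in>A. const_pm (f a))"
  by (induction A rule: infinite_finite_induct) (simp_all add: const_pm_zero const_pm_add)

lemma const_pm_prod: "const_pm (prod f A) = (\<Prod>a\<in>A. const_pm (f a))"
  by (induction A rule: infinite_finite_induct) (simp_all add: const_pm_one const_pm_mult)

lemma const_pm_power: "const_pm (a ^ n) = const_pm a ^ n"
  by (induction n) (simp_all add: const_pm_one const_pm_mult)

lemma const_pm_two: "const_pm 2 = 2"
  by (metis const_pm_add const_pm_one one_add_one)

lemma polar_coeff_const_pm: "polar_coeff (const_pm \<circ> c) a b = const_pm (polar_coeff c a b)"
  by (simp add: polar_coeff_def const_pm_mult const_pm_two)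

lemma quad_form_const_pm: "quad_form (const_pm \<circ> c) (const_pm \<circ> x) = const_pm (quad_form c x)"
proof -
  have supp: "{k. (const_pm \<circ> x) k \<noteq> 0} = {k. x k \<noteq> 0}" by (simp add: const_pm_eq_0)
  show ?thesis unfolding quad_form_def supp quad_form_on_def mono_val_def
    by (simp add: const_pm_sum const_pm_prod const_pm_mult const_pm_power)
qed

lemma galg_mult_const_pm: "galg_mult G (const_pm \<circ> x) (const_pm \<circ> y) = const_pm \<circ> galg_mult G x y"
  by (simp add: galg_mult_def fun_eq_iff const_pm_eq_0 const_pm_sum const_pm_mult case_prod_beta)

lemma law_eval_const_pm: "law_eval c (\<lambda>a. Poly_Mapping.single 0 a) x = quad_form (const_pm \<circ> c) x"
  by (simp add: law_eval_eq_quad_form const_pm_def o_def)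

lemma det2_quad_form_mult:
  fixes c :: "('g \<Rightarrow>\<^sub>0 nat) \<Rightarrow> 'c::comm_ring_1"
  assumes "det2 G c" "finite {k. x k \<noteq> 0}" "{k. x k \<noteq> 0} \<subseteq> carrier G"
    "finite {k. y k \<noteq> 0}" "{k. y k \<noteq> 0} \<subseteq> carrier G"
  shows "quad_form c (galg_mult G x y) = quad_form c x * quad_form c y"
proof -
  let ?emb = "const_pm :: 'c \<Rightarrow> (('g \<times> bool) \<Rightarrow>\<^sub>0 nat) \<Rightarrow>\<^sub>0 'c"
  have "galg_elem G (?emb \<circ> x)" "galg_elem G (?emb \<circ> y)"
    using assms by (simp_all add: galg_elem_def const_pm_eq_0)
  hence "law_eval c (\<lambda>a. Poly_Mapping.single 0 a) (galg_mult G (?emb \<circ> x) (?emb \<circ> y))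
      = law_eval c (\<lambda>a. Poly_Mapping.single 0 a) (?emb \<circ> x) * law_eval c (\<lambda>a. Poly_Mapping.single 0 a) (?emb \<circ> y)"
    using assms(1) unfolding det2_def by blast
  hence "?emb (quad_form c (galg_mult G x y)) = ?emb (quad_form c x) * ?emb (quad_form c y)"
    unfolding law_eval_const_pm galg_mult_const_pm quad_form_const_pm .
  thus ?thesis by (simp add: const_pm_eq_iff flip: const_pm_mult)
qed

section \<open>Tangent determinants in characteristic two\<close>

lemma char2_add_self:
  assumes "(2::'a::comm_ring_1) = 0"
  shows "x + x = (0::'a)"
  by (metis assms mult_2 mult_zero_left)

lemma char2_eq_if_add_eq_0:
  assumes "(2::'a::comm_ring_1) = 0" "x + y = (0::'a)"
  shows "x = y"
  by (metis assms add.assoc add.right_neutral char2_add_self add_0)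

lemma trivial_det_mono_sq: "g \<in> carrier G \<Longrightarrow> trivial_det G (mono_sq g) = 1"
  by (simp add: trivial_det_def monos2_eq keys_mono_sq)

lemma trivial_det_mono_pair:
  assumes "a \<in> carrier G" "b \<in> carrier G" "a \<noteq> b"
  shows "trivial_det G (mono_pair a b) = 2"
proof -
  have "mono_pair a b \<in> monos2 (carrier G)" using assms by (auto simp: monos2_eq)
  thus ?thesis using assms(3) by (simp add: trivial_det_def keys_mono_pair)
qed

locale tangent_law = group G for G :: "('g, 'b) monoid_scheme" (structure) +
  fixes c :: "('g \<Rightarrow>\<^sub>0 nat) \<Rightarrow> 'a::comm_ring_1 dual"
  assumes char2: "(2::'a) = 0" and det: "det2 G c" and reduce: "reduce_law c = trivial_det G"
begin

definition delta :: "'g \<Rightarrow> 'a" where "delta g = eps (c (mono_sq g))"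

definition tau :: "'g \<Rightarrow> 'a" where "tau g = eps (polar_coeff c \<one> g)"

lemma re_mono_sq: "g \<in> carrier G \<Longrightarrow> re (c (mono_sq g)) = 1"
  using fun_cong[OF reduce, of "mono_sq g"] by (simp add: reduce_law_def trivial_det_mono_sq)

lemma re_polar_coeff:
  assumes "a \<in> carrier G" "b \<in> carrier G"
  shows "re (polar_coeff c a b) = 0"
proof (cases "a = b")
  case True
  thus ?thesis using char2 by (simp add: polar_coeff_def)
next
  case False
  thus ?thesis using fun_cong[OF reduce, of "mono_pair a b"] assms char2
    by (simp add: reduce_law_def trivial_det_mono_pair polar_coeff_def)
qed

lemma quad_form_mult_on:
  assumes "finite A" "A \<subseteq> carrier G" "{k. x k \<noteq> 0} \<subseteq> A" "{k. y k \<noteq> 0} \<subseteq> A"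
  shows "quad_form c (galg_mult G x y) = quad_form c x * quad_form c y"
  using assms by (intro det2_quad_form_mult[OF det]) (auto intro: finite_subset)

lemma re_quad_form_two_points:
  "a \<in> carrier G \<Longrightarrow> b \<in> carrier G \<Longrightarrow> re (quad_form c (\<lambda>k. single_fn a 1 k + single_fn b 1 k)) = 0"
  by (simp add: quad_form_single_fn_add re_mono_sq re_polar_coeff one_add_one char2)

lemma eps_quad_form_two_points:
  "eps (quad_form c (\<lambda>k. single_fn a 1 k + single_fn b 1 k)) = delta a + delta b + eps (polar_coeff c a b)"
  by (simp add: quad_form_single_fn_add delta_def)

lemma mono_sq_mult:
  assumes "g \<in> carrier G" "h \<in> carrier G"
  shows "c (mono_sq (g \<otimes> h)) = c (mono_sq g) * c (mono_sq h)"
proof -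
  have "quad_form c (galg_mult G (single_fn g 1) (single_fn h 1))
      = quad_form c (single_fn g 1) * quad_form c (single_fn h 1)"
    using assms by (intro quad_form_mult_on[of "{g, h}"]) (auto simp: single_fn_def)
  thus ?thesis by (simp add: galg_mult_single_fn quad_form_single_fn)
qed

lemma delta_mult: "g \<in> carrier G \<Longrightarrow> h \<in> carrier G \<Longrightarrow> delta (g \<otimes> h) = delta g + delta h"
  by (simp add: delta_def mono_sq_mult re_mono_sq)

lemma delta_one: "delta \<one> = 0"
  using delta_mult[of \<one> \<one>] by simp

lemma eps_polar_coeff_left_mult:
  assumes "g \<in> carrier G" "k \<in> carrier G"
  shows "eps (polar_coeff c g (g \<otimes> k)) = tau k"
proof -
  let ?y = "\<lambda>m. single_fn \<one> 1 m + single_fn k 1 m"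
  have prod: "galg_mult G (single_fn g 1) ?y = (\<lambda>m. single_fn g 1 m + single_fn (g \<otimes> k) 1 m)"
    using assms by (simp add: galg_mult_add_right finite_single_fn_support galg_mult_single_fn)
  have "quad_form c (galg_mult G (single_fn g 1) ?y) = quad_form c (single_fn g 1) * quad_form c ?y"
    using assms by (intro quad_form_mult_on[of "{g, \<one>, k}"]) (auto simp: single_fn_def)
  hence "quad_form c (\<lambda>m. single_fn g 1 m + single_fn (g \<otimes> k) 1 m)
      = quad_form c (single_fn g 1) * quad_form c ?y"
    unfolding prod .
  from arg_cong[where f = eps, OF this]
  have "delta g + delta (g \<otimes> k) + eps (polar_coeff c g (g \<otimes> k)) = delta \<one> + delta k + tau k"
    using assms by (simp add: quad_form_single_fn eps_quad_form_two_points re_quad_form_two_points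
        re_mono_sq tau_def)
  thus ?thesis
    using assms by (simp add: delta_mult delta_one add.assoc[symmetric] char2_add_self[OF char2])
qed

lemma eps_polar_coeff_right_mult:
  assumes "g \<in> carrier G" "k \<in> carrier G"
  shows "eps (polar_coeff c g (k \<otimes> g)) = tau k"
proof -
  let ?x = "\<lambda>m. single_fn \<one> 1 m + single_fn k 1 m"
  have prod: "galg_mult G ?x (single_fn g 1) = (\<lambda>m. single_fn g 1 m + single_fn (k \<otimes> g) 1 m)"
    using assms by (simp add: galg_mult_add_left finite_single_fn_support galg_mult_single_fn add.commute)
  have "quad_form c (galg_mult G ?x (single_fn g 1)) = quad_form c ?x * quad_form c (single_fn g 1)"
    using assms by (intro quad_form_mult_on[of "{g, \<one>, k}"]) (auto simp: single_fn_def)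
  hence "quad_form c (\<lambda>m. single_fn g 1 m + single_fn (k \<otimes> g) 1 m)
      = quad_form c ?x * quad_form c (single_fn g 1)"
    unfolding prod .
  from arg_cong[where f = eps, OF this]
  have "delta g + delta (k \<otimes> g) + eps (polar_coeff c g (k \<otimes> g)) = delta \<one> + delta k + tau k"
    using assms by (simp add: quad_form_single_fn eps_quad_form_two_points re_quad_form_two_points
        re_mono_sq tau_def)
  thus ?thesis
    using assms by (simp add: delta_mult delta_one add.assoc[symmetric] add.commute[of "delta k"]
        char2_add_self[OF char2])
qed

lemma eps_polar_coeff: "a \<in> carrier G \<Longrightarrow> b \<in> carrier G \<Longrightarrow> eps (polar_coeff c a b) = tau (inv a \<otimes> b)"
  using eps_polar_coeff_left_mult[of a "inv a \<otimes> b"] by (simp add: m_assoc[symmetric])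

lemma tau_mult_swap:
  assumes "g \<in> carrier G" "h \<in> carrier G"
  shows "tau (g \<otimes> h) = tau (inv h \<otimes> g)"
proof -
  let ?x = "\<lambda>m. single_fn \<one> 1 m + single_fn g 1 m"
  let ?y = "\<lambda>m. single_fn \<one> 1 m + single_fn h 1 m"
  let ?V = "\<lambda>m. single_fn g 1 m + single_fn (g \<otimes> h) 1 m"
  let ?S = "{\<one>, h, g, g \<otimes> h}"
  have "galg_mult G ?x ?y = (\<lambda>m. galg_mult G (single_fn \<one> 1) ?y m + galg_mult G (single_fn g 1) ?y m)"
    by (rule galg_mult_add_left) (auto intro: finite_subset[of _ "{\<one>, h}"] simp: single_fn_def)
  also have "\<dots> = (\<lambda>m. ?y m + ?V m)"
    using assms by (simp add: galg_mult_add_right finite_single_fn_support galg_mult_single_fn)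
  finally have prod: "galg_mult G ?x ?y = (\<lambda>m. ?y m + ?V m)" .
  have "quad_form c (galg_mult G ?x ?y) = quad_form c ?x * quad_form c ?y"
    using assms by (intro quad_form_mult_on[of "{\<one>, g, h}"]) (auto simp: single_fn_def)
  hence "eps (quad_form c (\<lambda>m. ?y m + ?V m)) = 0"
    unfolding prod using assms by (simp add: re_quad_form_two_points)
  moreover have "quad_form c (\<lambda>m. ?y m + ?V m) = quad_form c ?y + quad_form c ?V + polar c ?S ?y ?V"
    by (rule quad_form_add) (auto simp: single_fn_def)
  moreover have "polar c ?S ?y ?V
      = polar_coeff c \<one> g + polar_coeff c \<one> (g \<otimes> h) + (polar_coeff c h g + polar_coeff c h (g \<otimes> h))"
    by (simp add: polar_add_left polar_add_right polar_single_fn)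
  ultimately have "(delta \<one> + delta h + tau h) + (delta g + delta (g \<otimes> h) + eps (polar_coeff c g (g \<otimes> h)))
      + (tau g + tau (g \<otimes> h) + (eps (polar_coeff c h g) + eps (polar_coeff c h (g \<otimes> h)))) = 0"
    by (simp add: eps_quad_form_two_points tau_def)
  hence "(0 + delta h + tau h) + (delta g + (delta g + delta h) + tau h)
      + (tau g + tau (g \<otimes> h) + (tau (inv h \<otimes> g) + tau g)) = 0"
    using assms by (simp only: delta_one delta_mult eps_polar_coeff_left_mult
        eps_polar_coeff_right_mult eps_polar_coeff)
  hence "tau (g \<otimes> h) + tau (inv h \<otimes> g) = 0"
    by (simp add: algebra_simps char2)
  thus ?thesis by (rule char2_eq_if_add_eq_0[OF char2])
qed

lemma tau_mult_square:
  assumes "x \<in> carrier G" "w \<in> carrier G"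
  shows "tau (x \<otimes> (w \<otimes> w)) = tau x"
proof -
  have "tau (x \<otimes> (w \<otimes> w)) = tau ((x \<otimes> w) \<otimes> w)" using assms by (simp add: m_assoc)
  also have "\<dots> = tau (inv w \<otimes> (x \<otimes> w))" using assms by (intro tau_mult_swap) simp_all
  also have "\<dots> = eps (polar_coeff c w (x \<otimes> w))" using assms by (simp add: eps_polar_coeff)
  also have "\<dots> = tau x" using assms by (simp add: eps_polar_coeff_right_mult)
  finally show ?thesis .
qed

lemma delta_mult_square: "x \<in> carrier G \<Longrightarrow> w \<in> carrier G \<Longrightarrow> delta (x \<otimes> (w \<otimes> w)) = delta x"
  by (simp add: delta_mult char2_add_self[OF char2, of "delta w"])

lemma tau_one: "tau \<one> = 0"
  by (simp add: tau_def polar_coeff_def char2)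

end

locale square_invariant = group G for G :: "('g, 'b) monoid_scheme" (structure) +
  fixes t :: "'g \<Rightarrow> 'x"
  assumes mult_square: "x \<in> carrier G \<Longrightarrow> w \<in> carrier G \<Longrightarrow> t (x \<otimes> (w \<otimes> w)) = t x"
begin

lemma mult_inv: "x \<in> carrier G \<Longrightarrow> w \<in> carrier G \<Longrightarrow> t (x \<otimes> inv w) = t (x \<otimes> w)"
  using mult_square[of "x \<otimes> inv w" w] by (simp add: m_assoc inv_mult_cancel_left)

lemma mult_swap:
  assumes "x \<in> carrier G" "u \<in> carrier G" "v \<in> carrier G"
  shows "t (x \<otimes> u \<otimes> v) = t (x \<otimes> v \<otimes> u)"
proof -
  let ?a = "inv u" and ?b = "u \<otimes> inv v"
  have "x \<otimes> u \<otimes> v = x \<otimes> v \<otimes> u \<otimes> (?a \<otimes> ?a) \<otimes> (?b \<otimes> ?b) \<otimes> (v \<otimes> v)"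
    using assms by (simp add: m_assoc inv_mult_cancel_left inv_mult_cancel_right)
  thus ?thesis using assms by (simp add: mult_square)
qed

lemma mult_commute: "u \<in> carrier G \<Longrightarrow> v \<in> carrier G \<Longrightarrow> t (u \<otimes> v) = t (v \<otimes> u)"
  using mult_swap[of \<one> u v] by simp

lemma inv_mult_mult:
  assumes "b \<in> carrier G" "k \<in> carrier G" "c \<in> carrier G"
  shows "t (inv b \<otimes> k \<otimes> c) = t (k \<otimes> c \<otimes> b)"
proof -
  have "t (inv b \<otimes> k \<otimes> c) = t (inv b \<otimes> c \<otimes> k)" using assms by (simp add: mult_swap)
  also have "\<dots> = t (k \<otimes> (inv b \<otimes> c))" using assms by (intro mult_commute) simp_all
  also have "\<dots> = t (k \<otimes> inv b \<otimes> c)" using assms by (simp add: m_assoc)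
  also have "\<dots> = t (k \<otimes> c \<otimes> inv b)" using assms by (simp add: mult_swap)
  also have "\<dots> = t (k \<otimes> c \<otimes> b)" using assms by (simp add: mult_inv)
  finally show ?thesis .
qed

lemma conj_sym:
  assumes "b \<in> carrier G" "c \<in> carrier G" "k \<in> carrier G"
  shows "t (inv b \<otimes> k \<otimes> c) = t (inv c \<otimes> k \<otimes> b)"
proof -
  have "t (inv b \<otimes> k \<otimes> c) = t (k \<otimes> c \<otimes> b)" using assms by (simp add: inv_mult_mult)
  also have "\<dots> = t (k \<otimes> b \<otimes> c)" using assms by (simp add: mult_swap)
  also have "\<dots> = t (inv c \<otimes> k \<otimes> b)" using assms by (simp add: inv_mult_mult)
  finally show ?thesis .
qed

lemma conj_invariant: "b \<in> carrier G \<Longrightarrow> k \<in> carrier G \<Longrightarrow> t (inv b \<otimes> k \<otimes> b) = t k"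
  using mult_swap[of "inv b" k b] by simp

lemma inv_mult_sym: "a \<in> carrier G \<Longrightarrow> b \<in> carrier G \<Longrightarrow> t (inv a \<otimes> b) = t (inv b \<otimes> a)"
  using conj_sym[of a b \<one>] by simp

end

lemma sq_subgroup_subset_carrier: "profinite_group G T \<Longrightarrow> sq_subgroup G T \<subseteq> carrier G"
  unfolding sq_subgroup_def profinite_group_def using closure_of_subset_topspace by metis

lemma square_in_sq_subgroup:
  assumes "profinite_group G T" "w \<in> carrier G"
  shows "w \<otimes>\<^bsub>G\<^esub> w \<in> sq_subgroup G T"
proof -
  let ?Sq = "{g \<otimes>\<^bsub>G\<^esub> g | g. g \<in> carrier G}"
  interpret group G using assms(1) by (simp add: profinite_group_def)
  have "w \<otimes>\<^bsub>G\<^esub> w \<in> generate G ?Sq"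
    using assms(2) by (intro generate.incl) auto
  moreover have "generate G ?Sq \<subseteq> topspace T"
    using generate_incl[of ?Sq] assms(1) by (auto simp: profinite_group_def)
  ultimately show ?thesis unfolding sq_subgroup_def using closure_of_subset by blast
qed

lemma (in square_invariant) mult_generate_squares:
  "w \<in> generate G {g \<otimes> g | g. g \<in> carrier G} \<Longrightarrow> y \<in> carrier G \<Longrightarrow> t (y \<otimes> w) = t y"
proof (induction arbitrary: y rule: generate.induct)
  case (incl h) thus ?case using mult_square by auto
next
  case (inv h)
  then obtain g where "g \<in> carrier G" "h = g \<otimes> g" by auto
  thus ?case using inv.prems by (simp add: inv_mult_group mult_square)
next
  case (eng h1 h2)
  have "h1 \<in> carrier G" "h2 \<in> carrier G"
    using generate_in_carrier[of "{g \<otimes> g | g. g \<in> carrier G}"] eng.hyps by auto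
  thus ?case using eng by (simp add: m_assoc[symmetric])
qed simp

lemma sq_subgroup_invariant:
  assumes pg: "profinite_group G T"
    and f: "continuous_map T (discrete_topology UNIV) f"
    and sq: "\<And>x w. x \<in> carrier G \<Longrightarrow> w \<in> carrier G \<Longrightarrow> f (x \<otimes>\<^bsub>G\<^esub> (w \<otimes>\<^bsub>G\<^esub> w)) = f x"
    and x: "x \<in> carrier G" and h: "h \<in> sq_subgroup G T"
  shows "f (x \<otimes>\<^bsub>G\<^esub> h) = f x"
proof -
  let ?Sq = "{g \<otimes>\<^bsub>G\<^esub> g | g. g \<in> carrier G}" and ?L = "\<lambda>w. x \<otimes>\<^bsub>G\<^esub> w"
  have grp: "group G" and top: "topspace T = carrier G"
    and mult: "continuous_map (prod_topology T T) T (\<lambda>(x, y). x \<otimes>\<^bsub>G\<^esub> y)"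
    using pg by (auto simp: profinite_group_def)
  interpret square_invariant G f by (intro square_invariant.intro square_invariant_axioms.intro grp sq)
  have "continuous_map T (prod_topology T T) (\<lambda>w. (x, w))"
    by (intro continuous_map_pairedI) (simp_all add: top x continuous_map_id[unfolded id_def])
  from continuous_map_compose[OF this mult] have "continuous_map T T ?L"
    by (simp add: o_def)
  hence "continuous_map T (discrete_topology UNIV) (f \<circ> ?L)"
    using f by (rule continuous_map_compose)
  hence closed: "closedin T {w \<in> topspace T. (f \<circ> ?L) w \<in> {f x}}"
    by (rule closedin_continuous_map_preimage) simp
  have "generate G ?Sq \<subseteq> {w \<in> topspace T. (f \<circ> ?L) w \<in> {f x}}"
    using mult_generate_squares x generate_incl[of ?Sq] top by auto
  hence "sq_subgroup G T \<subseteq> {w \<in> topspace T. (f \<circ> ?L) w \<in> {f x}}"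
    unfolding sq_subgroup_def using closed by (rule closure_of_minimal)
  thus ?thesis using h by auto
qed

text \<open>\<open>pair_of_mono\<close> chooses an ordering of the two variables of \<open>X\<^sub>aX\<^sub>b\<close>; the value
  \<open>t(a\<^sup>-\<^sup>1b)\<close> does not depend on it once \<open>t(a\<^sup>-\<^sup>1b) = t(b\<^sup>-\<^sup>1a)\<close>.\<close>

definition pair_of_mono :: "('g \<Rightarrow>\<^sub>0 nat) \<Rightarrow> 'g \<times> 'g" where
  "pair_of_mono \<alpha> = (SOME p. fst p \<noteq> snd p \<and> \<alpha> = mono_pair (fst p) (snd p))"

definition law_of_pair :: "('g, 'b) monoid_scheme \<Rightarrow> ('g \<Rightarrow> 'a) \<Rightarrow> ('g \<Rightarrow> 'a)
    \<Rightarrow> ('g \<Rightarrow>\<^sub>0 nat) \<Rightarrow> 'a::comm_ring_1 dual" where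
  "law_of_pair G t d \<alpha> = Dual (trivial_det G \<alpha>)
     (if \<alpha> \<in> monos2 (carrier G) then
        (if card (Poly_Mapping.keys \<alpha>) = 1 then d (SOME g. \<alpha> = mono_sq g)
         else t (inv\<^bsub>G\<^esub> (fst (pair_of_mono \<alpha>)) \<otimes>\<^bsub>G\<^esub> snd (pair_of_mono \<alpha>)))
      else 0)"

lemma law_of_pair_mono_sq: "g \<in> carrier G \<Longrightarrow> law_of_pair G t d (mono_sq g) = Dual 1 (d g)"
proof -
  assume g: "g \<in> carrier G"
  have "(SOME h. mono_sq g = mono_sq h) = g"
    by (rule some_equality) (auto dest: mono_sq_inj)
  thus ?thesis using g by (simp add: law_of_pair_def trivial_det_mono_sq keys_mono_sq monos2_eq)
qed

lemma law_of_pair_mono_pair: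
  assumes "a \<in> carrier G" "b \<in> carrier G" "a \<noteq> b"
    and sym: "t (inv\<^bsub>G\<^esub> b \<otimes>\<^bsub>G\<^esub> a) = t (inv\<^bsub>G\<^esub> a \<otimes>\<^bsub>G\<^esub> b)"
  shows "law_of_pair G t d (mono_pair a b) = Dual 2 (t (inv\<^bsub>G\<^esub> a \<otimes>\<^bsub>G\<^esub> b))"
proof -
  let ?p = "pair_of_mono (mono_pair a b)"
  have "\<exists>p. fst p \<noteq> snd p \<and> mono_pair a b = mono_pair (fst p) (snd p)"
    using assms(3) by (intro exI[of _ "(a, b)"]) simp
  hence p: "fst ?p \<noteq> snd ?p" "mono_pair a b = mono_pair (fst ?p) (snd ?p)"
    unfolding pair_of_mono_def by (metis (mono_tags, lifting) someI_ex)+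
  have "t (inv\<^bsub>G\<^esub> (fst ?p) \<otimes>\<^bsub>G\<^esub> snd ?p) = t (inv\<^bsub>G\<^esub> a \<otimes>\<^bsub>G\<^esub> b)"
    using mono_pair_eq[OF assms(3) p(1) p(2)] sym by auto
  moreover have "mono_pair a b \<in> monos2 (carrier G)" using assms by (auto simp: monos2_eq)
  ultimately show ?thesis using assms by (simp add: law_of_pair_def trivial_det_mono_pair keys_mono_pair)
qed

lemma law_of_pair_outside: "\<alpha> \<notin> monos2 (carrier G) \<Longrightarrow> law_of_pair G t d \<alpha> = 0"
  by (simp add: law_of_pair_def trivial_det_def)

lemma reduce_law_of_pair: "reduce_law (law_of_pair G t d) = trivial_det G"
  by (simp add: reduce_law_def law_of_pair_def fun_eq_iff)

lemma polar_coeff_law_of_pair: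
  assumes "square_invariant G t" "(2::'a::comm_ring_1) = 0" "t \<one>\<^bsub>G\<^esub> = 0"
    "a \<in> carrier G" "b \<in> carrier G"
  shows "polar_coeff (law_of_pair G t (d :: 'g \<Rightarrow> 'a)) a b = Dual 0 (t (inv\<^bsub>G\<^esub> a \<otimes>\<^bsub>G\<^esub> b))"
proof -
  interpret square_invariant G t by (fact assms(1))
  show ?thesis
    using assms by (cases "a = b")
      (simp_all add: polar_coeff_def law_of_pair_mono_sq law_of_pair_mono_pair dual_two_eq_0 inv_mult_sym)
qed

lemma det2_law_of_pair:
  assumes "square_invariant G t" and char2: "(2::'a::comm_ring_1) = 0" and "t \<one>\<^bsub>G\<^esub> = 0"
    and d_hom: "\<And>g h. g \<in> carrier G \<Longrightarrow> h \<in> carrier G \<Longrightarrow> d (g \<otimes>\<^bsub>G\<^esub> h) = d g + d h"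
  shows "det2 G (law_of_pair G t d :: ('g \<Rightarrow>\<^sub>0 nat) \<Rightarrow> 'a dual)"
proof -
  interpret square_invariant G t by (fact assms(1))
  let ?c = "law_of_pair G t d :: ('g \<Rightarrow>\<^sub>0 nat) \<Rightarrow> 'a dual"
  let ?emb = "const_pm :: 'a dual \<Rightarrow> (('g \<times> bool) \<Rightarrow>\<^sub>0 nat) \<Rightarrow>\<^sub>0 'a dual"
  have d_one: "d \<one>\<^bsub>G\<^esub> = 0" using d_hom[of "\<one>\<^bsub>G\<^esub>" "\<one>\<^bsub>G\<^esub>"] by simp
  interpret poly: infinitesimal_det G "?emb \<circ> ?c" "?emb (Dual 0 1)" "\<lambda>k. ?emb (Dual (t k) 0)"
  proof (unfold_locales)
    show "(2 :: (('g \<times> bool) \<Rightarrow>\<^sub>0 nat) \<Rightarrow>\<^sub>0 'a dual) = 0"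
      using const_pm_two[symmetric] dual_two_eq_0[OF char2] const_pm_zero by metis
    show "?emb (Dual 0 1) * ?emb (Dual 0 1) = 0"
      by (simp add: const_pm_mult[symmetric] Dual_mult const_pm_zero)
  next
    fix g h assume "g \<in> carrier G" "h \<in> carrier G"
    thus "(?emb \<circ> ?c) (mono_sq (g \<otimes>\<^bsub>G\<^esub> h)) = (?emb \<circ> ?c) (mono_sq g) * (?emb \<circ> ?c) (mono_sq h)"
      by (simp add: law_of_pair_mono_sq const_pm_mult[symmetric] Dual_mult d_hom add.commute)
  next
    fix g assume "g \<in> carrier G"
    thus "?emb (Dual 0 1) * (?emb \<circ> ?c) (mono_sq g) = ?emb (Dual 0 1)"
      by (simp add: law_of_pair_mono_sq const_pm_mult[symmetric] Dual_mult)
  next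
    fix a b assume "a \<in> carrier G" "b \<in> carrier G"
    thus "polar_coeff (?emb \<circ> ?c) a b = ?emb (Dual 0 1) * ?emb (Dual (t (inv\<^bsub>G\<^esub> a \<otimes>\<^bsub>G\<^esub> b)) 0)"
      using assms by (simp add: polar_coeff_const_pm polar_coeff_law_of_pair const_pm_mult[symmetric] Dual_mult)
  qed (simp_all add: conj_sym conj_invariant)
  show ?thesis
    unfolding det2_def
  proof (intro conjI allI impI)
    show "law2 G ?c" by (simp add: law2_def law_of_pair_outside)
    have "galg_one G = single_fn \<one>\<^bsub>G\<^esub> (1 :: (('g \<times> bool) \<Rightarrow>\<^sub>0 nat) \<Rightarrow>\<^sub>0 'a dual)"
      by (simp add: galg_one_def single_fn_def fun_eq_iff)
    thus "law_eval ?c (\<lambda>a. Poly_Mapping.single 0 a) (galg_one G) = (1 :: (('g \<times> bool) \<Rightarrow>\<^sub>0 nat) \<Rightarrow>\<^sub>0 'a dual)"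
      by (simp add: law_eval_const_pm quad_form_single_fn law_of_pair_mono_sq d_one const_pm_one one_closed)
    fix x y :: "'g \<Rightarrow> (('g \<times> bool) \<Rightarrow>\<^sub>0 nat) \<Rightarrow>\<^sub>0 'a dual"
    assume "galg_elem G x" "galg_elem G y"
    thus "law_eval ?c (\<lambda>a. Poly_Mapping.single 0 a) (galg_mult G x y)
        = law_eval ?c (\<lambda>a. Poly_Mapping.single 0 a) x * law_eval ?c (\<lambda>a. Poly_Mapping.single 0 a) y"
      unfolding law_eval_const_pm galg_elem_def by (intro poly.quad_form_galg_mult) auto
  qed
qed

section \<open>The classification of tangent determinants\<close>

lemma continuous_map_discrete_postcompose:
  "continuous_map X (discrete_topology UNIV) f \<Longrightarrow> continuous_map X (discrete_topology UNIV) (\<lambda>x. h (f x))"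
  using continuous_map_compose[of X _ f _ h] by (simp add: o_def)

lemma ex1_eq_add_Dual:
  fixes x a :: "'a::comm_ring_1 dual"
  assumes "re x = re a" "eps a = 0"
  shows "\<exists>!t. x = a + Dual 0 t"
proof (rule ex1I[of _ "eps x"])
  show "x = a + Dual 0 (eps x)" using assms by (intro dual_eqI) simp_all
qed (use assms in simp)

lemma tangent_law_if_tangent_dets:
  assumes "profinite_group G T" "(2::'a::comm_ring_1) = 0" "(c :: ('g \<Rightarrow>\<^sub>0 nat) \<Rightarrow> 'a dual) \<in> tangent_dets G T"
  shows "tangent_law G c"
  using assms by (intro tangent_law.intro tangent_law_axioms.intro)
    (auto simp: profinite_group_def tangent_dets_def)

context tangent_law
begin

lemma tau_delta_eq: "tau_delta G c = (restrict tau (carrier G), restrict delta (carrier G))"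
  by (simp add: tau_delta_def det_trace_eq det_on_eq tau_def[abs_def] delta_def[abs_def])

lemma det_trace_form: "g \<in> carrier G \<Longrightarrow> \<exists>!t. det_trace G c g = 2 + Dual 0 t"
  by (intro ex1_eq_add_Dual) (simp_all add: det_trace_eq re_polar_coeff char2)

lemma det_on_form: "g \<in> carrier G \<Longrightarrow> \<exists>!d. det_on G c g = 1 + Dual 0 d"
  by (intro ex1_eq_add_Dual) (simp_all add: det_on_eq re_mono_sq)

lemma law_of_pair_tau_delta: "law_of_pair G (restrict tau (carrier G)) (restrict delta (carrier G)) = c"
proof
  fix \<alpha>
  show "law_of_pair G (restrict tau (carrier G)) (restrict delta (carrier G)) \<alpha> = c \<alpha>"
  proof (cases "\<alpha> \<in> monos2 (carrier G)")
    case False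
    thus ?thesis using det by (simp add: law_of_pair_outside det2_def law2_def)
  next
    case True
    then consider (sq) g where "g \<in> carrier G" "\<alpha> = mono_sq g"
      | (pair) a b where "a \<in> carrier G" "b \<in> carrier G" "a \<noteq> b" "\<alpha> = mono_pair a b"
      unfolding monos2_eq by auto
    thus ?thesis
    proof cases
      case sq
      thus ?thesis by (intro dual_eqI) (simp_all add: law_of_pair_mono_sq re_mono_sq delta_def)
    next
      case pair
      have "tau (inv b \<otimes> a) = tau (inv a \<otimes> b)"
        using pair by (metis eps_polar_coeff polar_coeff_comm)
      hence "law_of_pair G (restrict tau (carrier G)) (restrict delta (carrier G)) \<alpha>
          = Dual 2 (tau (inv a \<otimes> b))"
        using pair by (simp add: law_of_pair_mono_pair)
      moreover have "c \<alpha> = polar_coeff c a b" using pair by (simp add: polar_coeff_def)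
      ultimately show ?thesis
        using pair by (intro dual_eqI) (simp_all add: re_polar_coeff eps_polar_coeff char2)
    qed
  qed
qed

end

lemma tau_delta_in_quot_pairs:
  assumes pg: "profinite_group G T" and char2: "(2::'a::comm_ring_1) = 0"
    and c: "(c :: ('g \<Rightarrow>\<^sub>0 nat) \<Rightarrow> 'a dual) \<in> tangent_dets G T"
  shows "tau_delta G c \<in> quot_pairs G T"
proof -
  interpret tangent_law G c by (rule tangent_law_if_tangent_dets[OF assms])
  have top: "topspace T = carrier G" using pg by (simp add: profinite_group_def)
  have "continuous_map T (discrete_topology UNIV) (\<lambda>g. eps (det_trace G c g))"
    "continuous_map T (discrete_topology UNIV) (\<lambda>g. eps (det_on G c g))"
    using c by (auto intro: continuous_map_discrete_postcompose simp: tangent_dets_def)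
  hence cont: "continuous_map T (discrete_topology UNIV) tau" "continuous_map T (discrete_topology UNIV) delta"
    by (simp_all add: det_trace_eq det_on_eq tau_def[abs_def] delta_def[abs_def])
  hence "continuous_map T (discrete_topology UNIV) (restrict tau (carrier G))"
    "continuous_map T (discrete_topology UNIV) (restrict delta (carrier G))"
    using top by (auto elim!: continuous_map_eq)
  moreover have "tau (g \<otimes>\<^bsub>G\<^esub> h) = tau g" "delta (g \<otimes>\<^bsub>G\<^esub> h) = delta g"
    if "g \<in> carrier G" "h \<in> sq_subgroup G T" for g h
    using sq_subgroup_invariant[OF pg cont(1) tau_mult_square that]
      sq_subgroup_invariant[OF pg cont(2) delta_mult_square that] by auto
  moreover have "sq_subgroup G T \<subseteq> carrier G" by (rule sq_subgroup_subset_carrier[OF pg])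
  ultimately show ?thesis
    unfolding tau_delta_eq quot_pairs_def using tau_one by (auto simp: delta_mult)
qed

lemma law_of_pair_tau_delta_if_tangent_dets:
  assumes "profinite_group G T" "(2::'a::comm_ring_1) = 0" "(c :: ('g \<Rightarrow>\<^sub>0 nat) \<Rightarrow> 'a dual) \<in> tangent_dets G T"
  shows "law_of_pair G (fst (tau_delta G c)) (snd (tau_delta G c)) = c"
proof -
  interpret tangent_law G c by (rule tangent_law_if_tangent_dets[OF assms])
  show ?thesis by (simp add: tau_delta_eq law_of_pair_tau_delta)
qed

lemma square_invariant_if_quot_pairs:
  assumes "profinite_group G T" "(t, d) \<in> quot_pairs G T"
  shows "square_invariant G t"
proof (intro square_invariant.intro square_invariant_axioms.intro)
  show "group G" using assms(1) by (simp add: profinite_group_def)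
  fix x w assume "x \<in> carrier G" "w \<in> carrier G"
  thus "t (x \<otimes>\<^bsub>G\<^esub> (w \<otimes>\<^bsub>G\<^esub> w)) = t x"
    using assms square_in_sq_subgroup[OF assms(1)] by (auto simp: quot_pairs_def)
qed

lemma law_of_pair_in_tangent_dets:
  assumes pg: "profinite_group G T" and char2: "(2::'a::comm_ring_1) = 0"
    and td: "(t, d) \<in> quot_pairs G T"
  shows "(law_of_pair G t d :: ('g \<Rightarrow>\<^sub>0 nat) \<Rightarrow> 'a dual) \<in> tangent_dets G T
    \<and> tau_delta G (law_of_pair G t d) = (t, d)"
proof -
  let ?c = "law_of_pair G t d :: ('g \<Rightarrow>\<^sub>0 nat) \<Rightarrow> 'a dual"
  have sq_inv: "square_invariant G t" by (rule square_invariant_if_quot_pairs[OF pg td])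
  interpret square_invariant G t by (fact sq_inv)
  have top: "topspace T = carrier G" using pg by (simp add: profinite_group_def)
  have t_one: "t \<one>\<^bsub>G\<^esub> = 0"
    and d_hom: "\<And>g h. g \<in> carrier G \<Longrightarrow> h \<in> carrier G \<Longrightarrow> d (g \<otimes>\<^bsub>G\<^esub> h) = d g + d h"
    and ext: "t \<in> extensional (carrier G)" "d \<in> extensional (carrier G)"
    and cont: "continuous_map T (discrete_topology UNIV) t" "continuous_map T (discrete_topology UNIV) d"
    using td by (auto simp: quot_pairs_def)
  have trace: "det_trace G ?c g = Dual 0 (t g)" and on: "det_on G ?c g = Dual 1 (d g)"
    if "g \<in> carrier G" for g
    using that polar_coeff_law_of_pair[OF sq_inv char2 t_one]
    by (simp_all add: det_trace_eq det_on_eq law_of_pair_mono_sq)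
  have "continuous_map T (discrete_topology UNIV) (det_trace G ?c)"
    by (rule continuous_map_eq[OF continuous_map_discrete_postcompose[OF cont(1), of "Dual 0"]])
      (simp add: top trace)
  moreover have "continuous_map T (discrete_topology UNIV) (det_on G ?c)"
    by (rule continuous_map_eq[OF continuous_map_discrete_postcompose[OF cont(2), of "Dual 1"]])
      (simp add: top on)
  moreover have "det2 G ?c" by (rule det2_law_of_pair[OF sq_inv char2 t_one d_hom])
  moreover have "tau_delta G ?c = (t, d)"
    using ext by (auto simp: tau_delta_def trace on extensional_def fun_eq_iff)
  ultimately show ?thesis by (simp add: tangent_dets_def reduce_law_of_pair)
qed

lemma tau_delta_tangent_add:
  "tau_delta G (tangent_add c1 c2)
    = ((\<lambda>g\<in>carrier G. fst (tau_delta G c1) g + fst (tau_delta G c2) g),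
       (\<lambda>g\<in>carrier G. snd (tau_delta G c1) g + snd (tau_delta G c2) g))"
proof -
  have "eps (polar_coeff (tangent_add c1 c2) a b) = eps (polar_coeff c1 a b) + eps (polar_coeff c2 a b)" for a b
    by (cases "a = b") (simp_all add: polar_coeff_def tangent_add_def distrib_left)
  thus ?thesis by (auto simp: tau_delta_def det_trace_eq det_on_eq tangent_add_def intro!: restrict_ext)
qed

lemma tau_delta_tangent_smult:
  "tau_delta G (tangent_smult r c)
    = ((\<lambda>g\<in>carrier G. r * fst (tau_delta G c) g), (\<lambda>g\<in>carrier G. r * snd (tau_delta G c) g))"
proof -
  have "eps (polar_coeff (tangent_smult r c) a b) = r * eps (polar_coeff c a b)" for a b
    by (cases "a = b") (simp_all add: polar_coeff_def tangent_smult_def mult.left_commute)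
  thus ?thesis by (auto simp: tau_delta_def det_trace_eq det_on_eq tangent_smult_def intro!: restrict_ext)
qed

theorem mainTheorem19:
  fixes G :: "('g, 'b) monoid_scheme" and T :: "'g topology"
  assumes "profinite_group G T"
    and "(2 :: 'a :: comm_ring_1) = 0"
  shows "(\<forall>c \<in> (tangent_dets G T :: (('g \<Rightarrow>\<^sub>0 nat) \<Rightarrow> 'a dual) set). \<forall>g\<in>carrier G.
            (\<exists>!t. det_trace G c g = 2 + Dual 0 t) \<and> (\<exists>!d. det_on G c g = 1 + Dual 0 d))
       \<and> bij_betw (tau_delta G) (tangent_dets G T :: (('g \<Rightarrow>\<^sub>0 nat) \<Rightarrow> 'a dual) set) (quot_pairs G T)
       \<and> (\<forall>c1\<in>(tangent_dets G T :: (('g \<Rightarrow>\<^sub>0 nat) \<Rightarrow> 'a dual) set). \<forall>c2\<in>(tangent_dets G T :: (('g \<Rightarrow>\<^sub>0 nat) \<Rightarrow> 'a dual) set).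
            tau_delta G (tangent_add c1 c2)
              = ((\<lambda>g\<in>carrier G. fst (tau_delta G c1) g + fst (tau_delta G c2) g),
                 (\<lambda>g\<in>carrier G. snd (tau_delta G c1) g + snd (tau_delta G c2) g)))
       \<and> (\<forall>a :: 'a. \<forall>c\<in>tangent_dets G T.
            tau_delta G (tangent_smult a c)
              = ((\<lambda>g\<in>carrier G. a * fst (tau_delta G c) g),
                 (\<lambda>g\<in>carrier G. a * snd (tau_delta G c) g)))"
proof -
  note tangent_law = tangent_law_if_tangent_dets[OF assms]
  have "bij_betw (tau_delta G) (tangent_dets G T :: (('g \<Rightarrow>\<^sub>0 nat) \<Rightarrow> 'a dual) set) (quot_pairs G T)"
  proof (rule bij_betw_byWitness[where f' = "\<lambda>(t, d). law_of_pair G t d"])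
    show "\<forall>c\<in>tangent_dets G T :: (_ \<Rightarrow> 'a dual) set. (\<lambda>(t, d). law_of_pair G t d) (tau_delta G c) = c"
      using law_of_pair_tau_delta_if_tangent_dets[OF assms] by (simp add: case_prod_beta)
    show "\<forall>p\<in>quot_pairs G T. tau_delta G ((\<lambda>(t, d). law_of_pair G t d) p :: _ \<Rightarrow> 'a dual) = p"
      using law_of_pair_in_tangent_dets[OF assms] by auto
    show "tau_delta G ` (tangent_dets G T :: (_ \<Rightarrow> 'a dual) set) \<subseteq> quot_pairs G T"
      using tau_delta_in_quot_pairs[OF assms] by auto
    show "(\<lambda>(t, d). law_of_pair G t d) ` quot_pairs G T \<subseteq> (tangent_dets G T :: (_ \<Rightarrow> 'a dual) set)"
      using law_of_pair_in_tangent_dets[OF assms] by auto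
  qed
  moreover have "\<forall>c \<in> (tangent_dets G T :: (('g \<Rightarrow>\<^sub>0 nat) \<Rightarrow> 'a dual) set). \<forall>g\<in>carrier G.
      (\<exists>!t. det_trace G c g = 2 + Dual 0 t) \<and> (\<exists>!d. det_on G c g = 1 + Dual 0 d)"
    by (simp add: tangent_law.det_trace_form[OF tangent_law] tangent_law.det_on_form[OF tangent_law])
  ultimately show ?thesis by (simp add: tau_delta_tangent_add tau_delta_tangent_smult)
qed

end
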